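(* Let $(\beta,\gamma)\in[0,\infty)\times[2,\infty)$ and $G\in\mathcal S_{\beta,\gamma}$. Then there exists $C>0$ such that $\sup_{x\in\mathbb Z}|\Theta(n)\mathcal K_{n,\beta}G(\tfrac xn)|\le C$ for all $n\ge1$, and $$\lim_{n\to\infty}\frac1n\sum_{x\in\mathbb Z}\big|\Theta(n)\mathcal K_{n,\beta}G(\tfrac xn)-\kappa_\gamma\Delta G(\tfrac xn)\big|=0.$$
   Context: Fix $\gamma\ge2$, $\alpha>0$, $\beta\ge0$. Let $p(0)=0$, $p(x)=c_\gamma|x|^{-\gamma-1}$ ($x\ne0$), $c_\gamma$ normalizing so $\sum_xp(x)=1$; $m=\sum_{x\ge1}xp(x)$, $\sigma^2=\sum_xx^2p(x)$ when $\gamma>2$, $\kappa_\gamma=c_2$ if $\gamma=2$ and $\sigma^2/2$ if $\gamma>2$, $\hat\alpha=\alpha m/\kappa_\gamma$. $\Theta(n)=n^2$ if $\gamma>2$, $n^2/\log n$ if $\gamma=2$. Test functions: $G=\mathbb 1_{\{u<0\}}G_-+\mathbb 1_{\{u\ge0\}}G_+$ with $G_\pm$ Schwartz (for $G\in\mathcal S(\mathbb R)$, $G_\pm=G$); $\mathcal S_{Neu}(\mathbb R^* )$: $G_\pm^{(2k+1)}(0)=0$ for all $k\ge0$; $\mathcal S_{Rob}(\mathbb R^* )$: $G_-^{(2k+1)}(0)=G_+^{(2k+1)}(0)=\hat\alpha[G_+^{(2k)}(0)-G_-^{(2k)}(0)]$ for all $k\ge0$. $\mathcal S_{\beta,\gamma}=\mathcal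 S(\mathbb R)$ (Schwartz space) if $\beta<1$, $\mathcal S_{Rob}(\mathbb R^* )$ if $\beta=1,\gamma>2$, $\mathcal S_{Neu}(\mathbb R^* )$ otherwise. $\Delta G$ denotes the piecewise second derivative: $\Delta G(u)=G_-''(u)$ for $u<0$, $G_+''(u)$ for $u\ge0$. Operator: if $\beta\in[0,1)$, $\mathcal K_{n,\beta}G(\tfrac xn)=\sum_{r\in\mathbb Z}[G(\tfrac{x+r}n)-G(\tfrac xn)]p(r)$; if $\beta\ge1$, $\mathcal K_{n,\beta}G(\tfrac xn)=\sum_{y\ge0}[G(\tfrac yn)-G(\tfrac xn)-n^{-1}G_+'(0)(y-x)]p(y-x)$ for $x\ge0$ and $\mathcal K_{n,\beta}G(\tfrac xn)=\sum_{y\le-1}[G(\tfrac yn)-G(\tfrac xn)-n^{-1}G_-'(0)(y-x)]p(y-x)$ for $x\le-1$. *)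

theory Defs
  imports "HOL-Analysis.Analysis"
begin

definition c_gam :: "real \<Rightarrow> real" where
  "c_gam \<gamma> = 1 / (2 * (\<Sum>\<^sub>\<infinity>x\<in>{1::int..}. \<bar>real_of_int x\<bar> powr (-\<gamma> - 1)))"

definition pker :: "real \<Rightarrow> int \<Rightarrow> real" where
  "pker \<gamma> x = (if x = 0 then 0 else c_gam \<gamma> * \<bar>real_of_int x\<bar> powr (-\<gamma> - 1))"

definition m_gam :: "real \<Rightarrow> real" where
  "m_gam \<gamma> = (\<Sum>\<^sub>\<infinity>x\<in>{1::int..}. real_of_int x * pker \<gamma> x)"

definition sigma2 :: "real \<Rightarrow> real" where
  "sigma2 \<gamma> = (\<Sum>\<^sub>\<infinity>x\<in>(UNIV::int set). (real_of_int x)^2 * pker \<gamma> x)"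

definition kappa :: "real \<Rightarrow> real" where
  "kappa \<gamma> = (if \<gamma> = 2 then c_gam 2 else sigma2 \<gamma> / 2)"

definition alpha_hat :: "real \<Rightarrow> real \<Rightarrow> real" where
  "alpha_hat \<alpha> \<gamma> = \<alpha> * m_gam \<gamma> / kappa \<gamma>"

text \<open>Time scaling; for gamma = 2 and n = 1 the value n^2/ln n is 0 in HOL (division by 0).\<close>
definition Theta :: "real \<Rightarrow> nat \<Rightarrow> real" where
  "Theta \<gamma> n = (if \<gamma> > 2 then real n ^ 2 else real n ^ 2 / ln (real n))"

definition schwartz :: "(real \<Rightarrow> real) \<Rightarrow> bool" where
  "schwartz f \<longleftrightarrow>
     (\<forall>k x. ((deriv ^^ k) f) differentiable (at x)) \<and>
     (\<forall>j k. \<exists>C. \<forall>x. \<bar>x\<bar> ^ j * \<bar>(deriv ^^ k) f x\<bar> \<le> C)"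

text \<open>A test function is given by the pair (G_-, G_+); G u = G_- u for u<0, G_+ u for u>=0.\<close>
definition glue :: "(real \<Rightarrow> real) \<Rightarrow> (real \<Rightarrow> real) \<Rightarrow> real \<Rightarrow> real" where
  "glue Gm Gp u = (if u < 0 then Gm u else Gp u)"

definition lapl :: "(real \<Rightarrow> real) \<Rightarrow> (real \<Rightarrow> real) \<Rightarrow> real \<Rightarrow> real" where
  "lapl Gm Gp u = (if u < 0 then deriv (deriv Gm) u else deriv (deriv Gp) u)"

definition S_R :: "(real \<Rightarrow> real) \<Rightarrow> (real \<Rightarrow> real) \<Rightarrow> bool" where
  "S_R Gm Gp \<longleftrightarrow> schwartz Gp \<and> Gm = Gp"

definition S_Neu :: "(real \<Rightarrow> real) \<Rightarrow> (real \<Rightarrow> real) \<Rightarrow> bool" where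
  "S_Neu Gm Gp \<longleftrightarrow> schwartz Gm \<and> schwartz Gp \<and>
     (\<forall>k. (deriv ^^ (2*k+1)) Gm 0 = 0 \<and> (deriv ^^ (2*k+1)) Gp 0 = 0)"

definition S_Rob :: "real \<Rightarrow> (real \<Rightarrow> real) \<Rightarrow> (real \<Rightarrow> real) \<Rightarrow> bool" where
  "S_Rob ah Gm Gp \<longleftrightarrow> schwartz Gm \<and> schwartz Gp \<and>
     (\<forall>k. (deriv ^^ (2*k+1)) Gm 0 = ah * ((deriv ^^ (2*k)) Gp 0 - (deriv ^^ (2*k)) Gm 0) \<and>
          (deriv ^^ (2*k+1)) Gp 0 = ah * ((deriv ^^ (2*k)) Gp 0 - (deriv ^^ (2*k)) Gm 0))"

definition S_class :: "real \<Rightarrow> real \<Rightarrow> real \<Rightarrow> (real \<Rightarrow> real) \<Rightarrow> (real \<Rightarrow> real) \<Rightarrow> bool" where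
  "S_class \<alpha> \<beta> \<gamma> Gm Gp =
     (if \<beta> < 1 then S_R Gm Gp
      else if \<beta> = 1 \<and> \<gamma> > 2 then S_Rob (alpha_hat \<alpha> \<gamma>) Gm Gp
      else S_Neu Gm Gp)"

definition Kop :: "real \<Rightarrow> real \<Rightarrow> (real \<Rightarrow> real) \<Rightarrow> (real \<Rightarrow> real) \<Rightarrow> nat \<Rightarrow> int \<Rightarrow> real" where
  "Kop \<beta> \<gamma> Gm Gp n x =
    (let G = glue Gm Gp; N = real n in
     if \<beta> < 1 then
       (\<Sum>\<^sub>\<infinity>r\<in>(UNIV::int set). (G ((x + r) / N) - G (x / N)) * pker \<gamma> r)
     else if x \<ge> 0 then
       (\<Sum>\<^sub>\<infinity>y\<in>{0::int..}. (G (y / N) - G (x / N) - deriv Gp 0 * (y - x) / N) * pker \<gamma> (y - x))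
     else
       (\<Sum>\<^sub>\<infinity>y\<in>{..-1::int}. (G (y / N) - G (x / N) - deriv Gm 0 * (y - x) / N) * pker \<gamma> (y - x)))"

end

theory Submission
  imports Defs
begin

text \<open>
  Pairing the jumps \<open>k\<close> and \<open>-k\<close> writes the generator at \<open>x\<close> as a sum over \<open>k \<ge> 1\<close> of
  \<open>p(k)\<close> times a second difference of \<open>G\<close> at \<open>x/n\<close> with step \<open>k/n\<close>. For the reflected
  dynamics (\<open>\<beta> \<ge> 1\<close>) jumps leaving the half line are suppressed, so once \<open>k\<close> exceeds the
  distance to the origin the pair degenerates into a one-sided first-order Taylor remainder.

  After multiplication by \<open>\<Theta>(n)\<close>, the second differences with \<open>k \<le> n\<close> contribute
  \<open>k\<^sup>2 G''(x/n)\<close> up to a third-order error of size \<open>k\<^sup>3/n\<close>, and the truncated second moment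
  \<open>\<Theta>(n)/n\<^sup>2 \<Sum>\<^sub>k\<^sub>\<le>\<^sub>n k\<^sup>2 p(k)\<close> tends to \<open>\<kappa>\<^sub>\<gamma>\<close> (for \<open>\<gamma> = 2\<close> it grows like the
  harmonic numbers, which the logarithm in \<open>\<Theta>(n)\<close> compensates). All remaining terms -- the
  third-order errors, jumps longer than \<open>n\<close>, and the one-sided remainders near the origin --
  are dominated by explicit profiles that are uniformly bounded and whose sum over \<open>x\<close> is
  \<open>o(n)\<close>. The one-sided remainders carry the slope \<open>G'(0)\<close> against the second moment of the
  jumps longer than \<open>n\<close>, which vanishes in the limit only if \<open>\<gamma> > 2\<close> or \<open>G'(0) = 0\<close>: this is
  where the Robin and Neumann conditions on the test functions enter.
\<close>

section \<open>Sums over the integers\<close>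

lemma range_int_Un_range_neg_int: "range int \<union> range (\<lambda>k. - int k) = (UNIV :: int set)"
proof (rule set_eqI)
  fix r :: int
  show "r \<in> range int \<union> range (\<lambda>k. - int k) \<longleftrightarrow> r \<in> UNIV"
    by (cases r rule: int_cases2) auto
qed

lemma summable_on_int_abs_powr:
  assumes "s < -1"
  shows "(\<lambda>r::int. \<bar>real_of_int r\<bar> powr s) summable_on UNIV"
proof -
  have nat: "(\<lambda>k::nat. real k powr s) summable_on UNIV"
    using assms summable_on_UNIV_nonneg_real_iff[of "\<lambda>k::nat. real k powr s"] summable_real_powr_iff
    by simp
  have "(\<lambda>r::int. \<bar>real_of_int r\<bar> powr s) summable_on range int"
    using nat by (subst summable_on_reindex) (auto simp: o_def)
  moreover have "(\<lambda>r::int. \<bar>real_of_int r\<bar> powr s) summable_on range (\<lambda>k. - int k)"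
    using nat by (subst summable_on_reindex) (auto simp: o_def inj_on_def)
  ultimately have "(\<lambda>r::int. \<bar>real_of_int r\<bar> powr s) summable_on range int \<union> range (\<lambda>k. - int k)"
    by (rule summable_on_union)
  then show ?thesis
    by (simp only: range_int_Un_range_neg_int)
qed

lemma infsum_int_symmetric:
  fixes f :: "int \<Rightarrow> 'a::banach"
  assumes f: "f summable_on UNIV"
  shows "(\<lambda>k::nat. f (int k) + f (- int k)) summable_on {1..}"
    and "infsum f UNIV = f 0 + (\<Sum>\<^sub>\<infinity>k\<in>{1::nat..}. f (int k) + f (- int k))"
proof -
  have pos: "inj_on int {1..}" and neg: "inj_on (\<lambda>k::nat. - int k) {1..}"
    by (auto simp: inj_on_def)
  have s1: "f summable_on int ` {1..}" and s2: "f summable_on (\<lambda>k. - int k) ` {1..}"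
    by (auto intro: summable_on_subset_banach[OF f])
  have t1: "(\<lambda>k::nat. f (int k)) summable_on {1..}"
    using s1 summable_on_reindex[OF pos, of f] by (simp add: o_def)
  have t2: "(\<lambda>k::nat. f (- int k)) summable_on {1..}"
    using s2 summable_on_reindex[OF neg, of f] by (simp add: o_def)
  show "(\<lambda>k::nat. f (int k) + f (- int k)) summable_on {1..}"
    by (rule summable_on_add[OF t1 t2])
  have U: "(UNIV::int set) = {0} \<union> (int ` {1..} \<union> (\<lambda>k. - int k) ` {1..})"
  proof (rule set_eqI)
    fix r :: int
    show "r \<in> UNIV \<longleftrightarrow> r \<in> {0} \<union> (int ` {1..} \<union> (\<lambda>k. - int k) ` {1..})"
      by (cases r rule: int_cases3) (simp_all add: image_iff)
  qed
  have d: "int ` {1..} \<inter> (\<lambda>k. - int k) ` {1..} = {}"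
    by auto
  have "infsum f UNIV = f 0 + infsum f (int ` {1..} \<union> (\<lambda>k. - int k) ` {1..})"
    by (subst U, subst infsum_Un_disjoint) (use summable_on_Un_disjoint[OF s1 s2 d] in auto)
  also have "infsum f (int ` {1..} \<union> (\<lambda>k. - int k) ` {1..})
      = (\<Sum>\<^sub>\<infinity>k\<in>{1::nat..}. f (int k)) + (\<Sum>\<^sub>\<infinity>k\<in>{1::nat..}. f (- int k))"
    by (simp only: infsum_Un_disjoint[OF s1 s2 d] infsum_reindex[OF pos] infsum_reindex[OF neg] o_def)
  also have "\<dots> = (\<Sum>\<^sub>\<infinity>k\<in>{1::nat..}. f (int k) + f (- int k))"
    by (rule infsum_add[symmetric, OF t1 t2])
  finally show "infsum f UNIV = f 0 + (\<Sum>\<^sub>\<infinity>k\<in>{1::nat..}. f (int k) + f (- int k))" .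
qed

lemma infsum_int_restrict_symmetric:
  fixes f :: "int \<Rightarrow> 'a::banach" and S :: "int set"
  assumes f: "f summable_on UNIV" and f0: "f 0 = 0"
  shows "(\<lambda>k::nat. (if int k \<in> S then f (int k) else 0) + (if - int k \<in> S then f (- int k) else 0))
      summable_on {1..}" (is "?g summable_on _")
    and "infsum f S = (\<Sum>\<^sub>\<infinity>k\<in>{1..}. (if int k \<in> S then f (int k) else 0)
      + (if - int k \<in> S then f (- int k) else 0))"
proof -
  define fS where "fS r = (if r \<in> S then f r else 0)" for r
  have "f summable_on S"
    using f by (rule summable_on_subset_banach) simp
  then have "fS summable_on UNIV"
    by (rule summable_on_cong_neutral[THEN iffD1, rotated -1]) (auto simp: fS_def)
  moreover have "infsum f S = infsum fS UNIV"
    by (rule infsum_cong_neutral) (auto simp: fS_def)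
  ultimately show "?g summable_on {1..}" and "infsum f S = infsum ?g {1..}"
    using infsum_int_symmetric[of fS] by (simp_all add: fS_def f0)
qed

lemma infsum_int_even_le:
  fixes f :: "int \<Rightarrow> real"
  assumes f0: "\<And>x. 0 \<le> f x" and even: "\<And>x. f (- x) = f x"
    and f: "(\<lambda>k::nat. f (int k)) summable_on UNIV"
  shows "f summable_on UNIV" and "infsum f UNIV \<le> 2 * (\<Sum>\<^sub>\<infinity>k. f (int k))"
proof -
  define A where "A = range int"
  define B where "B = range (\<lambda>k. - int k)"
  have sA: "f summable_on A" and iA: "infsum f A = (\<Sum>\<^sub>\<infinity>k. f (int k))"
    using f by (simp_all add: A_def summable_on_reindex infsum_reindex o_def)
  have sB: "f summable_on B" and iB: "infsum f B = (\<Sum>\<^sub>\<infinity>k. f (int k))"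
    using f even by (simp_all add: B_def summable_on_reindex infsum_reindex o_def inj_on_def)
  have UNIV: "A \<union> B = UNIV"
    unfolding A_def B_def by (rule range_int_Un_range_neg_int)
  show "f summable_on UNIV"
    using summable_on_union[OF sA sB] by (simp only: UNIV)
  have "infsum f UNIV = infsum f A + infsum f B - infsum f (A \<inter> B)"
    unfolding UNIV[symmetric]
    by (rule infsum_Un_Int) (auto intro: summable_on_subset_banach[OF sA] summable_on_subset_banach[OF sB])
  moreover have "0 \<le> infsum f (A \<inter> B)"
    by (rule infsum_nonneg) (rule f0)
  ultimately show "infsum f UNIV \<le> 2 * (\<Sum>\<^sub>\<infinity>k. f (int k))"
    using iA iB by simp
qed

lemma summable_on_diff:
  fixes f g :: "'a \<Rightarrow> 'b::banach"
  assumes "f summable_on A" and "g summable_on A"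
  shows "(\<lambda>x. f x - g x) summable_on A"
  using summable_on_add[OF assms(1) summable_on_uminus[THEN iffD2, OF assms(2)]] by simp

lemma infsum_diff:
  fixes f g :: "'a \<Rightarrow> 'b::banach"
  assumes "f summable_on A" and "g summable_on A"
  shows "(\<Sum>\<^sub>\<infinity>x\<in>A. f x - g x) = infsum f A - infsum g A"
  using infsum_add[OF assms(1) summable_on_uminus[THEN iffD2, OF assms(2)]] by (simp add: infsum_uminus)

lemma summable_on_dominated:
  fixes f :: "'a \<Rightarrow> real"
  assumes "g summable_on A" and "\<And>x. x \<in> A \<Longrightarrow> \<bar>f x\<bar> \<le> g x"
  shows "f summable_on A"
  using summable_on_comparison_test[of g A "\<lambda>x. norm (f x)"] assms
  by (auto intro: abs_summable_summable)

lemma infsum_swap_nonneg: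
  fixes f :: "'a \<Rightarrow> 'b \<Rightarrow> real"
  assumes nonneg: "\<And>a b. a \<in> A \<Longrightarrow> b \<in> B \<Longrightarrow> 0 \<le> f a b"
    and inner: "\<And>a. a \<in> A \<Longrightarrow> f a summable_on B"
    and outer: "(\<lambda>a. infsum (f a) B) summable_on A"
  shows "(\<lambda>b. \<Sum>\<^sub>\<infinity>a\<in>A. f a b) summable_on B"
    and "(\<Sum>\<^sub>\<infinity>b\<in>B. \<Sum>\<^sub>\<infinity>a\<in>A. f a b) = (\<Sum>\<^sub>\<infinity>a\<in>A. infsum (f a) B)"
proof -
  have "(\<lambda>(a, b). f a b) summable_on Sigma A (\<lambda>_. B)"
    by (rule summable_on_SigmaI[where g = "\<lambda>a. infsum (f a) B"]) (use inner outer nonneg in auto)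
  then have "(\<lambda>(a, b). f a b) summable_on A \<times> B"
    by simp
  then have "(\<lambda>(b, a). f a b) summable_on B \<times> A"
    using summable_on_swap[of "\<lambda>(a, b). f a b" A B] by (simp add: case_prod_unfold)
  then show "(\<lambda>b. \<Sum>\<^sub>\<infinity>a\<in>A. f a b) summable_on B"
    using summable_on_Sigma_banach[of "\<lambda>b a. f a b" B "\<lambda>_. A"] by simp
  show "(\<Sum>\<^sub>\<infinity>b\<in>B. \<Sum>\<^sub>\<infinity>a\<in>A. f a b) = (\<Sum>\<^sub>\<infinity>a\<in>A. infsum (f a) B)"
    using infsum_swap_banach[of f A B] \<open>(\<lambda>(a, b). f a b) summable_on A \<times> B\<close> by simp
qed

lemma telescoping_infsum_le:
  fixes f g :: "nat \<Rightarrow> real"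
  assumes f0: "\<And>k. m \<le> k \<Longrightarrow> 0 \<le> f k"
    and fg: "\<And>k. m \<le> k \<Longrightarrow> f k \<le> g k - g (Suc k)"
    and g0: "\<And>k. 0 \<le> g k"
  shows "f summable_on {m..}" and "infsum f {m..} \<le> g m"
proof -
  have telescope: "(\<Sum>k = m..<N. g k - g (Suc k)) = g m - g N" if "m \<le> N" for N
    using that by (induction N rule: dec_induct) simp_all
  have bound: "sum f F \<le> g m" if F: "finite F" "F \<subseteq> {m..}" for F
  proof -
    define N where "N = Suc (Max (insert m F))"
    have Max: "k \<le> Max (insert m F)" if "k \<in> insert m F" for k
      by (rule Max_ge) (use F that in auto)
    have mN: "m \<le> N"
      unfolding N_def by (rule le_SucI, rule Max) simp
    have FN: "F \<subseteq> {m..<N}"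
      using F(2) Max unfolding N_def by (auto simp: less_Suc_eq_le)
    have "sum f F \<le> sum f {m..<N}"
      by (rule sum_mono2) (use FN f0 in auto)
    also have "\<dots> \<le> (\<Sum>k = m..<N. g k - g (Suc k))"
      by (rule sum_mono) (use fg in auto)
    also have "\<dots> \<le> g m"
      using telescope[OF mN] g0[of N] by simp
    finally show ?thesis .
  qed
  have bdd: "bdd_above (sum f ` {F. F \<subseteq> {m..} \<and> finite F})"
    using bound by (auto simp: bdd_above_def)
  show sf: "f summable_on {m..}"
    by (rule nonneg_bdd_above_summable_on[OF _ bdd]) (use f0 in auto)
  show "infsum f {m..} \<le> g m"
    by (rule infsum_le_finite_sums[OF sf bound])
qed

lemma infsum_greaterThan_tendsto_0:
  fixes f :: "nat \<Rightarrow> real"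
  assumes f: "f summable_on UNIV"
  shows "(\<lambda>n. infsum f {n<..}) \<longlonglongrightarrow> 0"
proof -
  have "(\<lambda>n. sum f {..<Suc n}) \<longlonglongrightarrow> infsum f UNIV"
    using has_sum_imp_sums[OF has_sum_infsum[OF f]] unfolding sums_def by (rule LIMSEQ_Suc)
  from tendsto_diff[OF tendsto_const[of "infsum f UNIV"] this]
  have "(\<lambda>n. infsum f UNIV - sum f {..<Suc n}) \<longlonglongrightarrow> 0"
    by (simp del: sum.lessThan_Suc)
  moreover have "infsum f {n<..} = infsum f UNIV - sum f {..<Suc n}" for n
  proof -
    have "(UNIV :: nat set) = {..n} \<union> {n<..}"
      by auto
    then have "infsum f UNIV = infsum f ({..n} \<union> {n<..})"
      by simp
    also have "\<dots> = sum f {..n} + infsum f {n<..}"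
      by (subst infsum_Un_disjoint) (auto intro: summable_on_subset_banach[OF f])
    finally show ?thesis
      by (simp add: lessThan_Suc_atMost)
  qed
  ultimately show ?thesis
    by simp
qed

lemma cesaro_mean_tendsto_0:
  fixes g :: "nat \<Rightarrow> real"
  assumes lim: "g \<longlonglongrightarrow> 0" and g0: "\<And>k. 0 \<le> g k"
  shows "(\<lambda>n. (\<Sum>k = 1..n. g k) / real n) \<longlonglongrightarrow> 0"
proof (rule LIMSEQ_I)
  fix \<epsilon> :: real
  assume \<epsilon>: "\<epsilon> > 0"
  obtain N where N: "\<And>k. k \<ge> N \<Longrightarrow> g k < \<epsilon> / 2"
    using LIMSEQ_D[OF lim, of "\<epsilon> / 2"] \<epsilon> g0 by (metis abs_of_nonneg diff_zero half_gt_zero real_norm_def)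
  define A where "A = (\<Sum>k<Suc N. g k)"
  obtain L :: nat where L: "real L > 2 * A / \<epsilon>"
    using reals_Archimedean2 by blast
  show "\<exists>no. \<forall>n\<ge>no. norm ((\<Sum>k = 1..n. g k) / real n - 0) < \<epsilon>"
  proof (intro exI allI impI)
    fix n
    assume n: "n \<ge> Suc (L + N)"
    have "(\<Sum>k = 1..n. g k) \<le> (\<Sum>k \<in> {..<Suc N} \<union> {Suc N..n}. g k)"
      by (rule sum_mono2) (auto intro: g0)
    also have "\<dots> = A + (\<Sum>k = Suc N..n. g k)"
      unfolding A_def by (rule sum.union_disjoint) auto
    also have "(\<Sum>k = Suc N..n. g k) \<le> (\<Sum>k = Suc N..n. \<epsilon> / 2)"
      by (rule sum_mono) (use N in \<open>fastforce intro: less_imp_le\<close>)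
    also have "\<dots> \<le> real n * (\<epsilon> / 2)"
      using \<epsilon> n by (simp add: mult_right_mono)
    also have "A < real n * (\<epsilon> / 2)"
    proof -
      have "2 * A / \<epsilon> < real n"
        using L n by linarith
      then show ?thesis
        using \<epsilon> by (simp add: field_simps)
    qed
    finally have "(\<Sum>k = 1..n. g k) < real n * \<epsilon>"
      by (simp add: mult.commute)
    moreover have "0 \<le> (\<Sum>k = 1..n. g k)"
      by (intro sum_nonneg g0)
    ultimately show "norm ((\<Sum>k = 1..n. g k) / real n - 0) < \<epsilon>"
      using n by (simp add: field_simps)
  qed
qed

lemma convergent_abs_bounded:
  fixes X :: "nat \<Rightarrow> real"
  assumes "convergent X"
  shows "\<exists>C. \<forall>n. \<bar>X n\<bar> \<le> C"
  using convergent_imp_Bseq[OF assms] unfolding Bseq_def by auto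

lemma inverse_ln_tendsto_0: "(\<lambda>n. 1 / ln (real n)) \<longlonglongrightarrow> 0"
proof -
  have "filterlim (\<lambda>n. ln (real n)) at_top sequentially"
    by (rule filterlim_compose[OF ln_at_top filterlim_real_sequentially])
  then show ?thesis
    by (intro tendsto_divide_0[OF tendsto_const] filterlim_mono[OF _ at_top_le_at_infinity order_refl])
qed

lemma harm_over_ln_tendsto_1: "(\<lambda>n. harm n / ln (real n) :: real) \<longlonglongrightarrow> 1"
proof -
  have "(\<lambda>n. 1 + (harm n - ln (real n)) * (1 / ln (real n)) :: real) \<longlonglongrightarrow> 1 + euler_mascheroni * 0"
    by (intro tendsto_intros euler_mascheroni_LIMSEQ inverse_ln_tendsto_0)
  moreover have "\<forall>\<^sub>F n in sequentially. 1 + (harm n - ln (real n)) * (1 / ln (real n)) = harm n / ln (real n)"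
  proof (rule eventually_sequentiallyI[of 2])
    fix n :: nat
    assume "n \<ge> 2"
    then have "ln (real n) > 0"
      by simp
    then show "1 + (harm n - ln (real n)) * (1 / ln (real n)) = harm n / ln (real n)"
      by (simp add: field_simps)
  qed
  ultimately show ?thesis
    by (simp add: tendsto_cong)
qed

lemma inverse_cube_le_telescope:
  fixes x :: real
  assumes "x \<ge> 1"
  shows "1 / (x + 1) ^ 3 \<le> 1 / (2 * x^2) - 1 / (2 * (x + 1)^2)"
proof -
  have x: "x > 0"
    using assms by simp
  have "2 * x^2 * (x + 1)^2 \<le> (2 * x + 1) * (x + 1)^3"
  proof -
    have "2 * x^2 \<le> (2 * x + 1) * (x + 1)"
      using x by (simp add: power2_eq_square algebra_simps)
    then have "2 * x^2 * (x + 1)^2 \<le> (2 * x + 1) * (x + 1) * (x + 1)^2"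
      using x by (intro mult_right_mono) auto
    then show ?thesis
      by (simp add: power2_eq_square power3_eq_cube algebra_simps)
  qed
  then have "1 / (x + 1)^3 \<le> (2 * x + 1) / (2 * x^2 * (x + 1)^2)"
    using x by (simp add: divide_simps)
  also have "\<dots> = 1 / (2 * x^2) - 1 / (2 * (x + 1)^2)"
    using x by (simp add: divide_simps) (simp add: power2_eq_square algebra_simps)
  finally show ?thesis .
qed

lemma inverse_cube_tail_le:
  assumes "n \<ge> 1"
  shows "(\<lambda>k. 1 / real k ^ 3) summable_on {n<..}"
    and "(\<Sum>\<^sub>\<infinity>k\<in>{n<..}. 1 / real k ^ 3) \<le> 1 / (2 * real n ^ 2)"
proof -
  define g where "g k = 1 / (2 * (real k - 1)^2)" for k :: nat
  have step: "1 / real k ^ 3 \<le> g k - g (Suc k)" if "Suc n \<le> k" for k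
    using inverse_cube_le_telescope[of "real k - 1"] that assms by (simp add: g_def)
  note telescope = telescoping_infsum_le[of "Suc n" "\<lambda>k. 1 / real k ^ 3" g, OF _ step]
  show "(\<lambda>k. 1 / real k ^ 3) summable_on {n<..}"
    using telescope(1) by (simp add: g_def atLeast_Suc_greaterThan)
  show "(\<Sum>\<^sub>\<infinity>k\<in>{n<..}. 1 / real k ^ 3) \<le> 1 / (2 * real n ^ 2)"
    using telescope(2) by (simp add: g_def atLeast_Suc_greaterThan)
qed

section \<open>The jump kernel and its moments\<close>

lemma c_gam_pos: "\<gamma> > 0 \<Longrightarrow> c_gam \<gamma> > 0"
proof -
  assume "\<gamma> > 0"
  then have "(\<lambda>x::int. \<bar>real_of_int x\<bar> powr (-\<gamma> - 1)) summable_on {1..}"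
    by (intro summable_on_subset_banach[OF summable_on_int_abs_powr]) auto
  then have "sum (\<lambda>x::int. \<bar>real_of_int x\<bar> powr (-\<gamma> - 1)) {1}
      \<le> (\<Sum>\<^sub>\<infinity>x\<in>{1::int..}. \<bar>real_of_int x\<bar> powr (-\<gamma> - 1))"
    by (rule finite_sum_le_infsum) auto
  then show ?thesis
    unfolding c_gam_def by simp
qed

lemma pker_nonneg: "\<gamma> > 0 \<Longrightarrow> 0 \<le> pker \<gamma> r"
  unfolding pker_def using c_gam_pos[of \<gamma>] by simp

lemma pker_minus [simp]: "pker \<gamma> (- r) = pker \<gamma> r"
  unfolding pker_def by simp

lemma pker_zero [simp]: "pker \<gamma> 0 = 0"
  unfolding pker_def by simp

lemma pker_moment: "\<bar>real_of_int r\<bar> ^ j * pker \<gamma> r = c_gam \<gamma> * \<bar>real_of_int r\<bar> powr (real j - \<gamma> - 1)"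
proof (cases "r = 0")
  case False
  then have "\<bar>real_of_int r\<bar> ^ j = \<bar>real_of_int r\<bar> powr real j"
    by (simp add: powr_realpow)
  with False show ?thesis
    by (simp add: pker_def powr_add[symmetric] algebra_simps)
qed (cases j; simp)

lemma pker_moment_summable:
  assumes "real j < \<gamma>"
  shows "(\<lambda>r::int. \<bar>real_of_int r\<bar> ^ j * pker \<gamma> r) summable_on UNIV"
  unfolding pker_moment
  by (rule summable_on_cmult_right, rule summable_on_int_abs_powr) (use assms in auto)

lemma pker_summable: "\<gamma> > 0 \<Longrightarrow> pker \<gamma> summable_on A"
  using pker_moment_summable[of 0 \<gamma>] by (auto intro: summable_on_subset_banach)

lemma pker_moment_summable_nat:
  assumes "real j < \<gamma>"
  shows "(\<lambda>k::nat. real k ^ j * pker \<gamma> (int k)) summable_on A"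
proof -
  have "(\<lambda>r::int. \<bar>real_of_int r\<bar> ^ j * pker \<gamma> r) summable_on range int"
    by (rule summable_on_subset_banach[OF pker_moment_summable[OF assms]]) auto
  then have "(\<lambda>k::nat. real k ^ j * pker \<gamma> (int k)) summable_on UNIV"
    by (subst (asm) summable_on_reindex) (auto simp: o_def)
  then show ?thesis
    by (rule summable_on_subset_banach) auto
qed

lemma pker_summable_nat: "\<gamma> > 0 \<Longrightarrow> (\<lambda>k::nat. pker \<gamma> (int k)) summable_on A"
  using pker_moment_summable_nat[of 0 \<gamma>] by simp

lemma kappa_eq_infsum:
  assumes "\<gamma> > 2"
  shows "kappa \<gamma> = (\<Sum>\<^sub>\<infinity>k\<in>{1::nat..}. real k ^ 2 * pker \<gamma> (int k))"
proof -
  have "(\<lambda>r::int. (real_of_int r)^2 * pker \<gamma> r) summable_on UNIV"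
    using pker_moment_summable[of 2 \<gamma>] assms by simp
  from infsum_int_symmetric(2)[OF this]
  have "sigma2 \<gamma> = (\<Sum>\<^sub>\<infinity>k\<in>{1::nat..}. 2 * (real k ^ 2 * pker \<gamma> (int k)))"
    unfolding sigma2_def by (simp add: ac_simps)
  then show ?thesis
    using assms unfolding kappa_def infsum_cmult_right' by simp
qed

lemma pker_two:
  assumes "k \<ge> 1"
  shows "pker 2 (int k) = c_gam 2 / real k ^ 3"
proof -
  have "real k powr (-2 - 1) = real k powr (- 3)"
    by simp
  also have "\<dots> = 1 / real k ^ 3"
    by (simp add: powr_minus_divide)
  finally show ?thesis
    using assms by (simp add: pker_def)
qed

definition Theta_ratio :: "real \<Rightarrow> nat \<Rightarrow> real" where
  "Theta_ratio \<gamma> n = (if \<gamma> > 2 then 1 else 1 / ln (real n))"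

definition moment_upto :: "real \<Rightarrow> nat \<Rightarrow> nat \<Rightarrow> real" where
  "moment_upto \<gamma> j n = (\<Sum>k = 1..n. real k ^ j * pker \<gamma> (int k))"

definition moment_tail :: "real \<Rightarrow> nat \<Rightarrow> nat \<Rightarrow> real" where
  "moment_tail \<gamma> j n = (\<Sum>\<^sub>\<infinity>k\<in>{n<..}. real k ^ j * pker \<gamma> (int k))"

lemma Theta_eq_Theta_ratio: "Theta \<gamma> n = real n ^ 2 * Theta_ratio \<gamma> n"
  unfolding Theta_def Theta_ratio_def by simp

lemma Theta_ratio_nonneg: "0 \<le> Theta_ratio \<gamma> n"
  unfolding Theta_ratio_def by (cases n) auto

lemma moment_tail_tendsto_0:
  assumes "real j < \<gamma>"
  shows "moment_tail \<gamma> j \<longlonglongrightarrow> 0"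
  unfolding moment_tail_def[abs_def]
  by (rule infsum_greaterThan_tendsto_0[OF pker_moment_summable_nat[OF assms]])

lemma Theta_ratio_moment_upto_2_tendsto_kappa:
  assumes "\<gamma> \<ge> 2"
  shows "(\<lambda>n. Theta_ratio \<gamma> n * moment_upto \<gamma> 2 n) \<longlonglongrightarrow> kappa \<gamma>"
proof (cases "\<gamma> > 2")
  case True
  define f where "f k = real k ^ 2 * pker \<gamma> (int k)" for k
  have f: "f summable_on UNIV"
    unfolding f_def by (rule pker_moment_summable_nat) (use True in auto)
  have "(\<lambda>n. sum f {..<Suc n}) \<longlonglongrightarrow> infsum f UNIV"
    using has_sum_imp_sums[OF has_sum_infsum[OF f]] unfolding sums_def by (rule LIMSEQ_Suc)
  moreover have "sum f {..<Suc n} = moment_upto \<gamma> 2 n" for n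
    by (simp add: moment_upto_def f_def lessThan_Suc_atMost atMost_atLeast0 sum.atLeast_Suc_atMost)
  moreover have "infsum f UNIV = kappa \<gamma>"
    unfolding kappa_eq_infsum[OF True] f_def by (rule infsum_cong_neutral) auto
  ultimately show ?thesis
    using True by (simp add: Theta_ratio_def)
next
  case False
  then have \<gamma>: "\<gamma> = 2"
    using assms by simp
  have moment: "moment_upto 2 2 n = c_gam 2 * harm n" for n
    unfolding moment_upto_def harm_def sum_distrib_left
    by (rule sum.cong) (auto simp: pker_two power_eq_if divide_simps)
  have "(\<lambda>n. c_gam 2 * (harm n / ln (real n))) \<longlonglongrightarrow> c_gam 2 * 1"
    by (intro tendsto_intros harm_over_ln_tendsto_1)
  then show ?thesis
    using \<gamma> by (simp add: Theta_ratio_def moment kappa_def)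
qed

lemma moment_upto_3_negligible:
  assumes "\<gamma> \<ge> 2"
  shows "(\<lambda>n. Theta_ratio \<gamma> n * moment_upto \<gamma> 3 n / real n) \<longlonglongrightarrow> 0"
proof (cases "\<gamma> > 2")
  case True
  define g where "g k = real k ^ 3 * pker \<gamma> (int k)" for k
  have "g = (\<lambda>k. c_gam \<gamma> * real k powr (2 - \<gamma>))"
    using pker_moment[of "int _" 3 \<gamma>] by (auto simp: g_def)
  moreover have "(\<lambda>k. c_gam \<gamma> * real k powr (2 - \<gamma>)) \<longlonglongrightarrow> c_gam \<gamma> * 0"
    by (intro tendsto_intros tendsto_neg_powr filterlim_real_sequentially) (use True in auto)
  ultimately have "g \<longlonglongrightarrow> 0"
    by simp
  moreover have "\<And>k. 0 \<le> g k"
    unfolding g_def using pker_nonneg[of \<gamma>] True by simp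
  ultimately show ?thesis
    using cesaro_mean_tendsto_0[of g] True
    by (simp add: Theta_ratio_def moment_upto_def g_def)
next
  case False
  then have \<gamma>: "\<gamma> = 2"
    using assms by simp
  have "moment_upto 2 3 n = real n * c_gam 2" for n
    unfolding moment_upto_def by (subst sum.cong[OF refl, of _ _ "\<lambda>_. c_gam 2"]) (auto simp: pker_two)
  then have "\<forall>\<^sub>F n in sequentially. c_gam 2 * (1 / ln (real n)) = Theta_ratio \<gamma> n * moment_upto \<gamma> 3 n / real n"
    using \<gamma> by (intro eventually_sequentiallyI[of 1]) (simp add: Theta_ratio_def)
  moreover have "(\<lambda>n. c_gam 2 * (1 / ln (real n))) \<longlonglongrightarrow> c_gam 2 * 0"
    by (intro tendsto_intros inverse_ln_tendsto_0)
  ultimately show ?thesis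
    by (simp add: tendsto_cong)
qed

lemma moment_tail_nonneg: "\<gamma> > 0 \<Longrightarrow> 0 \<le> moment_tail \<gamma> j n"
  unfolding moment_tail_def by (intro infsum_nonneg mult_nonneg_nonneg pker_nonneg) auto

lemma moment_tail_0_le_moment_tail_2:
  assumes \<gamma>: "\<gamma> > 2"
  shows "real n ^ 2 * moment_tail \<gamma> 0 n \<le> moment_tail \<gamma> 2 n"
proof -
  have \<gamma>0: "\<gamma> > 0"
    using \<gamma> by simp
  have "real n ^ 2 * moment_tail \<gamma> 0 n = (\<Sum>\<^sub>\<infinity>k\<in>{n<..}. real n ^ 2 * pker \<gamma> (int k))"
    unfolding moment_tail_def by (simp add: infsum_cmult_right')
  also have "\<dots> \<le> moment_tail \<gamma> 2 n"
    unfolding moment_tail_def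
  proof (rule infsum_mono)
    show "(\<lambda>k. real n ^ 2 * pker \<gamma> (int k)) summable_on {n<..}"
      by (intro summable_on_cmult_right pker_summable_nat \<gamma>0)
    show "(\<lambda>k. real k ^ 2 * pker \<gamma> (int k)) summable_on {n<..}"
      by (rule pker_moment_summable_nat) (use \<gamma> in simp)
    fix k
    assume "k \<in> {n<..}"
    then show "real n ^ 2 * pker \<gamma> (int k) \<le> real k ^ 2 * pker \<gamma> (int k)"
      using pker_nonneg[OF \<gamma>0] by (intro mult_right_mono power_mono) auto
  qed
  finally show ?thesis .
qed

lemma moment_tail_0_two_le:
  assumes n: "n \<ge> 1"
  shows "real n ^ 2 * moment_tail 2 0 n \<le> c_gam 2 / 2"
proof -
  have "moment_tail 2 0 n = c_gam 2 * (\<Sum>\<^sub>\<infinity>k\<in>{n<..}. 1 / real k ^ 3)"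
    unfolding moment_tail_def infsum_cmult_right'[symmetric]
    by (rule infsum_cong) (use n in \<open>auto simp: pker_two\<close>)
  also have "\<dots> \<le> c_gam 2 * (1 / (2 * real n ^ 2))"
    using inverse_cube_tail_le(2)[OF n] c_gam_pos[of 2] by (intro mult_left_mono) auto
  finally show ?thesis
    using n by (simp add: field_simps)
qed

lemma moment_tail_0_negligible:
  assumes "\<gamma> \<ge> 2"
  shows "(\<lambda>n. Theta_ratio \<gamma> n * real n ^ 2 * moment_tail \<gamma> 0 n) \<longlonglongrightarrow> 0"
proof -
  have nonneg: "\<forall>\<^sub>F n in sequentially. 0 \<le> Theta_ratio \<gamma> n * real n ^ 2 * moment_tail \<gamma> 0 n"
    using assms by (intro always_eventually allI mult_nonneg_nonneg Theta_ratio_nonneg moment_tail_nonneg) auto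
  show ?thesis
  proof (cases "\<gamma> > 2")
    case True
    then have le: "\<forall>\<^sub>F n in sequentially. Theta_ratio \<gamma> n * real n ^ 2 * moment_tail \<gamma> 0 n \<le> moment_tail \<gamma> 2 n"
      by (intro always_eventually allI) (simp add: Theta_ratio_def moment_tail_0_le_moment_tail_2)
    have "moment_tail \<gamma> 2 \<longlonglongrightarrow> 0"
      by (rule moment_tail_tendsto_0) (use True in simp)
    with nonneg le show ?thesis
      by (rule tendsto_sandwich[OF _ _ tendsto_const])
  next
    case False
    then have \<gamma>: "\<gamma> = 2"
      using assms by simp
    have le: "\<forall>\<^sub>F n in sequentially. Theta_ratio \<gamma> n * real n ^ 2 * moment_tail \<gamma> 0 n
        \<le> c_gam 2 / 2 * (1 / ln (real n))"
    proof (rule eventually_sequentiallyI[of 1])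
      fix n :: nat
      assume "n \<ge> 1"
      from mult_left_mono[OF moment_tail_0_two_le[OF this] Theta_ratio_nonneg[of 2 n]]
      show "Theta_ratio \<gamma> n * real n ^ 2 * moment_tail \<gamma> 0 n \<le> c_gam 2 / 2 * (1 / ln (real n))"
        by (simp add: \<gamma> Theta_ratio_def mult_ac)
    qed
    have "(\<lambda>n. c_gam 2 / 2 * (1 / ln (real n))) \<longlonglongrightarrow> 0"
      using tendsto_mult_right_zero[OF inverse_ln_tendsto_0] .
    with nonneg le show ?thesis
      by (rule tendsto_sandwich[OF _ _ tendsto_const])
  qed
qed

lemma slope_moment_tail_tendsto_0:
  assumes "\<gamma> > 2 \<or> D = 0"
  shows "(\<lambda>n. \<bar>D\<bar> * (Theta_ratio \<gamma> n * moment_tail \<gamma> 2 n)) \<longlonglongrightarrow> 0"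
proof (cases "D = 0")
  case False
  then have "\<gamma> > 2"
    using assms by simp
  then show ?thesis
    using tendsto_mult_right_zero[OF moment_tail_tendsto_0[of 2 \<gamma>], of "\<bar>D\<bar>"]
    by (simp add: Theta_ratio_def)
qed simp

lemma pker_piecewise_moments:
  assumes \<gamma>: "\<gamma> > 0" and tail: "b = 0 \<or> real j < \<gamma>"
  shows "(\<lambda>k. pker \<gamma> (int k) * (if k \<le> n then a * real k ^ i else b * real k ^ j)) summable_on {1..}"
    and "(\<Sum>\<^sub>\<infinity>k\<in>{1..}. pker \<gamma> (int k) * (if k \<le> n then a * real k ^ i else b * real k ^ j))
      = a * moment_upto \<gamma> i n + b * moment_tail \<gamma> j n"
proof -
  define f where "f k = pker \<gamma> (int k) * (if k \<le> n then a * real k ^ i else b * real k ^ j)" for k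
  have "(\<lambda>k. b * (real k ^ j * pker \<gamma> (int k))) summable_on {n<..}"
    using tail by (auto intro: summable_on_cmult_right pker_moment_summable_nat)
  then have tail_summable: "f summable_on {n<..}"
    by (rule summable_on_cong[THEN iffD1, rotated]) (simp add: f_def)
  have split: "{1..} = {1..n} \<union> {n<..}"
    by auto
  show "f summable_on {1..}"
    unfolding split by (rule summable_on_Un_disjoint) (auto intro: tail_summable)
  have "infsum f {1..} = sum f {1..n} + infsum f {n<..}"
    unfolding split by (subst infsum_Un_disjoint) (auto intro: tail_summable)
  also have "sum f {1..n} = a * moment_upto \<gamma> i n"
    by (simp add: f_def moment_upto_def sum_distrib_left mult_ac)
  also have "infsum f {n<..} = b * moment_tail \<gamma> j n"
    unfolding moment_tail_def infsum_cmult_right'[symmetric] by (rule infsum_cong) (simp add: f_def)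
  finally show "infsum f {1..} = a * moment_upto \<gamma> i n + b * moment_tail \<gamma> j n" .
qed

definition second_diff :: "(real \<Rightarrow> real) \<Rightarrow> real \<Rightarrow> real \<Rightarrow> real" where
  "second_diff H u h = H (u + h) + H (u - h) - 2 * H u"

definition first_order_rem :: "(real \<Rightarrow> real) \<Rightarrow> real \<Rightarrow> real \<Rightarrow> real \<Rightarrow> real" where
  "first_order_rem H D u h = H (u + h) - H u - D * h"

lemma decay_le_self: "0 \<le> M \<Longrightarrow> M / (1 + v^2) \<le> (M::real)"
  by (rule divide_left_mono[of 1, simplified]) (auto simp: add_pos_nonneg)

lemma decay_shift:
  fixes t u M :: real
  assumes "\<bar>t - u\<bar> \<le> 1" and "0 \<le> M"
  shows "M / (1 + t^2) \<le> 3 * M / (1 + u^2)"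
proof -
  have "u^2 \<le> 2 * t^2 + 2 * (u - t)^2"
    using zero_le_power2[of "t - (u - t)"] by (simp add: power2_eq_square algebra_simps)
  moreover have "(u - t)^2 \<le> 1"
    using power_le_one[OF abs_ge_zero assms(1), of 2] by (simp add: power2_commute)
  ultimately have "u^2 \<le> 2 + 3 * t^2"
    using zero_le_power2[of t] by linarith
  then have "1 + u^2 \<le> 3 * (1 + t^2)"
    by simp
  then have "M * (1 + u^2) \<le> M * (3 * (1 + t^2))"
    using assms(2) by (rule mult_left_mono)
  then show ?thesis
    by (simp add: divide_simps add_pos_nonneg) (simp add: algebra_simps)
qed

locale decaying_C3 =
  fixes H H1 H2 H3 :: "real \<Rightarrow> real" and M :: real
  assumes M_nonneg: "0 \<le> M"
    and has_deriv_H: "\<And>v. (H has_real_derivative H1 v) (at v)"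
    and has_deriv_H1: "\<And>v. (H1 has_real_derivative H2 v) (at v)"
    and has_deriv_H2: "\<And>v. (H2 has_real_derivative H3 v) (at v)"
    and decay_H: "\<And>v. \<bar>H v\<bar> \<le> M / (1 + v^2)"
    and decay_H2: "\<And>v. \<bar>H2 v\<bar> \<le> M / (1 + v^2)"
    and decay_H3: "\<And>v. \<bar>H3 v\<bar> \<le> M / (1 + v^2)"
begin

lemma bounded_H: "\<bar>H v\<bar> \<le> M"
  using decay_H[of v] decay_le_self[OF M_nonneg, of v] by linarith

lemma bounded_H2: "\<bar>H2 v\<bar> \<le> M"
  using decay_H2[of v] decay_le_self[OF M_nonneg, of v] by linarith

lemma second_diff_taylor:
  assumes h: "0 \<le> h" "h \<le> 1"
  shows "\<bar>second_diff H u h - h^2 * H2 u\<bar> \<le> h^3 * (M / (1 + u^2))"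
proof (cases "h = 0")
  case False
  then have hp: "h > 0"
    using h by simp
  define diff where "diff m = (if m = 0 then H else if m = 1 then H1 else if m = 2 then H2 else H3)"
    for m :: nat
  have D: "\<forall>m t. m < 3 \<and> u - h \<le> t \<and> t \<le> u + h \<longrightarrow> DERIV (diff m) t :> diff (Suc m) t"
  proof (intro allI impI)
    fix m :: nat and t
    assume "m < 3 \<and> u - h \<le> t \<and> t \<le> u + h"
    then have "m = 0 \<or> m = 1 \<or> m = 2"
      by auto
    then show "DERIV (diff m) t :> diff (Suc m) t"
      unfolding diff_def using has_deriv_H has_deriv_H1 has_deriv_H2 by auto
  qed
  have d0: "diff 0 = H"
    by (simp add: diff_def)
  have taylor2: "(\<Sum>m<3. diff m u / fact m * y ^ m) = H u + H1 u * y + H2 u / 2 * y^2" for y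
    by (simp add: numeral_3_eq_3 diff_def power2_eq_square)
  obtain t1 where t1: "u < t1" "t1 < u + h" "H (u + h) = H u + H1 u * h + H2 u / 2 * h^2 + H3 t1 / 6 * h ^ 3"
    using Taylor_up[OF _ d0 D, of u] hp by (auto simp: taylor2 diff_def numeral_3_eq_3 power2_eq_square)
  obtain t2 where t2: "u - h < t2" "t2 < u" "H (u - h) = H u - H1 u * h + H2 u / 2 * h^2 - H3 t2 / 6 * h ^ 3"
    using Taylor_down[OF _ d0 D, of u] hp by (auto simp: taylor2 diff_def numeral_3_eq_3 power2_eq_square)
  have taylor_diff: "second_diff H u h - h^2 * H2 u = (H3 t1 - H3 t2) / 6 * h^3"
    using t1(3) t2(3) by (simp add: second_diff_def algebra_simps)
  define q where "q = M / (1 + u^2)"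
  have "\<bar>H3 t\<bar> \<le> 3 * q" if "\<bar>t - u\<bar> \<le> 1" for t
    using decay_H3[of t] decay_shift[OF that M_nonneg] by (simp add: q_def)
  then have "\<bar>H3 t1\<bar> \<le> 3 * q" "\<bar>H3 t2\<bar> \<le> 3 * q"
    using t1 t2 h by (simp_all add: abs_le_iff)
  then have "\<bar>H3 t1 - H3 t2\<bar> / 6 \<le> q"
    by (simp add: abs_le_iff)
  then have "\<bar>H3 t1 - H3 t2\<bar> / 6 * h^3 \<le> q * h^3"
    using hp by (intro mult_right_mono) auto
  moreover have "\<bar>(H3 t1 - H3 t2) / 6 * h^3\<bar> = \<bar>H3 t1 - H3 t2\<bar> / 6 * h^3"
    using hp by (simp add: abs_mult)
  ultimately show ?thesis
    unfolding taylor_diff q_def by (simp add: mult.commute)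
qed (simp add: second_diff_def)

lemma first_order_rem_bound:
  assumes u: "0 \<le> u" "u \<le> h"
  shows "\<bar>first_order_rem H (H1 0) u h\<bar> \<le> 3 / 2 * M * h^2"
proof -
  have h: "0 \<le> h"
    using u by simp
  have "\<bar>H (u + h) - H u - H1 u * h\<bar> \<le> M / 2 * h^2"
  proof (cases "h = 0")
    case False
    define diff where "diff m = (if m = 0 then H else if m = 1 then H1 else H2)" for m :: nat
    have D: "\<forall>m t. m < 2 \<and> u \<le> t \<and> t \<le> u + h \<longrightarrow> DERIV (diff m) t :> diff (Suc m) t"
      by (auto simp: diff_def less_2_cases_iff has_deriv_H has_deriv_H1)
    obtain t where "H (u + h) = H u + H1 u * h + H2 t / 2 * h^2"
      using Taylor_up[OF _ _ D, of H u] h False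
      by (auto simp: diff_def numeral_2_eq_2 power2_eq_square)
    then show ?thesis
      using bounded_H2[of t] by (simp add: abs_mult mult_right_mono)
  qed simp
  moreover have "\<bar>H1 u - H1 0\<bar> \<le> M * h"
  proof (cases "u = 0")
    case False
    then obtain z where "H1 u - H1 0 = u * H2 z"
      using MVT2[of 0 u H1 H2] u has_deriv_H1 by fastforce
    then show ?thesis
      using bounded_H2[of z] u M_nonneg mult_mono[of u h "\<bar>H2 z\<bar>" M] by (simp add: abs_mult mult.commute)
  qed (use M_nonneg h in simp)
  ultimately have "\<bar>first_order_rem H (H1 0) u h\<bar> \<le> M / 2 * h^2 + M * h * h"
    unfolding first_order_rem_def using h
    by (smt (verit, best) abs_mult_pos left_diff_distrib mult_right_mono)
  then show ?thesis
    by (simp add: power2_eq_square algebra_simps)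
qed

end

lemma decaying_C3_reflect:
  assumes "decaying_C3 H H1 H2 H3 M"
  shows "decaying_C3 (\<lambda>v. H (- v)) (\<lambda>v. - H1 (- v)) (\<lambda>v. H2 (- v)) (\<lambda>v. - H3 (- v)) M"
proof -
  interpret decaying_C3 H H1 H2 H3 M by (fact assms)
  have minus: "((\<lambda>x::real. - x) has_real_derivative -1) (at v)" for v
    by (auto intro!: derivative_eq_intros)
  show ?thesis
  proof
    fix v :: real
    show "((\<lambda>v. H (- v)) has_real_derivative - H1 (- v)) (at v)"
      using DERIV_chain2[OF has_deriv_H minus] by simp
    show "((\<lambda>v. - H1 (- v)) has_real_derivative H2 (- v)) (at v)"
      using DERIV_minus[OF DERIV_chain2[OF has_deriv_H1 minus]] by simp
    show "((\<lambda>v. H2 (- v)) has_real_derivative - H3 (- v)) (at v)"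
      using DERIV_chain2[OF has_deriv_H2 minus] by simp
  qed (use M_nonneg decay_H[of "- _"] decay_H2[of "- _"] decay_H3[of "- _"] in auto)
qed

lemma schwartz_decaying_C3:
  assumes "schwartz f"
  shows "\<exists>M. decaying_C3 f (deriv f) (deriv (deriv f)) (deriv (deriv (deriv f))) M"
proof -
  have decay: "\<exists>C. \<forall>x. \<bar>(deriv ^^ k) f x\<bar> \<le> C / (1 + x^2)" for k
  proof -
    obtain C0 where C0: "\<And>x. \<bar>x\<bar> ^ 0 * \<bar>(deriv ^^ k) f x\<bar> \<le> C0"
      using assms unfolding schwartz_def by blast
    obtain C2 where C2: "\<And>x. \<bar>x\<bar> ^ 2 * \<bar>(deriv ^^ k) f x\<bar> \<le> C2"
      using assms unfolding schwartz_def by blast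
    have "(1 + x^2) * \<bar>(deriv ^^ k) f x\<bar> \<le> C0 + C2" for x
      using C0[of x] C2[of x] by (simp add: algebra_simps)
    then show ?thesis
      by (intro exI[of _ "C0 + C2"] allI) (simp add: divide_simps add_pos_nonneg mult.commute)
  qed
  obtain A B C where A: "\<And>x. \<bar>(deriv ^^ 0) f x\<bar> \<le> A / (1 + x^2)"
    and B: "\<And>x. \<bar>(deriv ^^ 2) f x\<bar> \<le> B / (1 + x^2)"
    and C: "\<And>x. \<bar>(deriv ^^ 3) f x\<bar> \<le> C / (1 + x^2)"
    using decay by metis
  have deriv: "((deriv ^^ k) f has_real_derivative (deriv ^^ Suc k) f v) (at v)" for k v
    using assms unfolding schwartz_def by (simp add: DERIV_deriv_iff_real_differentiable)
  define M where "M = max (max A B) (max C 0)"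
  have le_M: "Z / (1 + x^2) \<le> M / (1 + x^2)" if "Z \<le> M" for Z x
    using that by (simp add: divide_right_mono add_pos_nonneg)
  show ?thesis
  proof (intro exI[of _ M] decaying_C3.intro)
    fix v
    show "(f has_real_derivative deriv f v) (at v)"
      using deriv[of 0] by simp
    show "(deriv f has_real_derivative deriv (deriv f) v) (at v)"
      using deriv[of 1] by simp
    show "(deriv (deriv f) has_real_derivative deriv (deriv (deriv f)) v) (at v)"
      using deriv[of 2] by (simp add: numeral_2_eq_2 numeral_3_eq_3)
    show "\<bar>f v\<bar> \<le> M / (1 + v^2)"
      using order_trans[OF A le_M] by (simp add: M_def)
    show "\<bar>deriv (deriv f) v\<bar> \<le> M / (1 + v^2)"
      using order_trans[OF B le_M] by (simp add: M_def numeral_2_eq_2)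
    show "\<bar>deriv (deriv (deriv f)) v\<bar> \<le> M / (1 + v^2)"
      using order_trans[OF C le_M] by (simp add: M_def numeral_3_eq_3)
  qed (simp add: M_def)
qed

lemma schwartz_deriv2_bounded:
  assumes "schwartz f"
  obtains L where "\<And>u. \<bar>deriv (deriv f) u\<bar> \<le> L"
  using schwartz_decaying_C3[OF assms] decaying_C3.bounded_H2 by metis

text \<open>
  Only \<open>G\<^sub>\<plusminus>'(0) = 0\<close> is used from the Neumann conditions.
\<close>

lemma S_class_cases:
  assumes "S_class \<alpha> \<beta> \<gamma> Gm Gp"
  obtains (symmetric) "\<beta> < 1" "schwartz Gp" "Gm = Gp"
  | (half_line) "\<not> \<beta> < 1" "schwartz Gm" "schwartz Gp" "\<gamma> > 2 \<or> deriv Gm 0 = 0 \<and> deriv Gp 0 = 0"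
proof (cases "\<beta> < 1")
  case True
  then show ?thesis
    using assms symmetric unfolding S_class_def S_R_def by simp
next
  case False
  show ?thesis
  proof (cases "\<beta> = 1 \<and> \<gamma> > 2")
    case True
    then show ?thesis
      using assms False half_line unfolding S_class_def S_Rob_def by auto
  next
    case neumann: False
    then have "S_Neu Gm Gp"
      using assms False unfolding S_class_def by simp
    then have "schwartz Gm" "schwartz Gp" "(deriv ^^ (2 * 0 + 1)) Gm 0 = 0" "(deriv ^^ (2 * 0 + 1)) Gp 0 = 0"
      unfolding S_Neu_def by blast+
    then show ?thesis
      using False half_line by simp
  qed
qed

definition decay_weight :: "nat \<Rightarrow> int \<Rightarrow> real" where
  "decay_weight n x = 1 / (1 + (real_of_int x / real n)^2)"

lemma decay_weight_pos: "0 < decay_weight n x"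
  unfolding decay_weight_def by (simp add: add_pos_nonneg)

lemma decay_weight_le_1: "decay_weight n x \<le> 1"
  using decay_le_self[of 1] by (simp add: decay_weight_def)

lemma decay_weight_le_telescope:
  assumes n: "n \<ge> 1"
  shows "1 / (1 + (real j / real n)^2)
    \<le> 4 * real n ^ 2 / (real n + real j) - 4 * real n ^ 2 / (real n + real j + 1)"
proof -
  define a b where "a = real n" and "b = real j"
  have a: "a \<ge> 1" and b: "b \<ge> 0"
    using n by (simp_all add: a_def b_def)
  have "b \<le> b^2"
    by (cases "j = 0") (simp_all add: b_def power2_eq_square)
  moreover have "a \<le> a^2"
    using a by (simp add: power2_eq_square)
  moreover have "(a - b)^2 = a^2 - 2 * (a * b) + b^2"
    by (simp add: power2_eq_square algebra_simps)
  moreover have "0 \<le> (a - b)^2"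
    by (rule zero_le_power2)
  moreover have expand: "(a + b) * (a + b + 1) = a^2 + 2 * (a * b) + b^2 + a + b"
    by (simp add: power2_eq_square algebra_simps)
  ultimately have key: "(a + b) * (a + b + 1) \<le> 4 * a^2 + 4 * b^2"
    unfolding expand using zero_le_power2[of a] zero_le_power2[of b] by linarith
  have "1 / (1 + (b / a)^2) = a^2 / (a^2 + b^2)"
    using a by (simp add: field_simps power2_eq_square)
  also have "\<dots> \<le> 4 * a^2 / ((a + b) * (a + b + 1))"
    using a b mult_left_mono[OF key, of "a^2"] zero_le_power2[of a]
    by (simp add: divide_simps add_pos_nonneg mult.commute mult.left_commute)
  also have "\<dots> = 4 * a^2 / (a + b) - 4 * a^2 / (a + b + 1)"
    using a b by (simp add: field_simps)
  finally show ?thesis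
    by (simp add: a_def b_def)
qed

lemma decay_weight_summable_nat:
  assumes n: "n \<ge> 1"
  shows "(\<lambda>j::nat. decay_weight n (int j)) summable_on UNIV"
    and "(\<Sum>\<^sub>\<infinity>j. decay_weight n (int j)) \<le> 4 * real n"
proof -
  note telescope = telescoping_infsum_le[of 0 "\<lambda>j. decay_weight n (int j)"
      "\<lambda>j. 4 * real n ^ 2 / (real n + real j)"]
  have prems: "0 \<le> decay_weight n (int j)"
    "decay_weight n (int j) \<le> 4 * real n ^ 2 / (real n + real j) - 4 * real n ^ 2 / (real n + real (Suc j))"
    "0 \<le> 4 * real n ^ 2 / (real n + real j)" for j
    using decay_weight_pos[of n "int j"] decay_weight_le_telescope[OF n, of j]
    by (simp_all add: decay_weight_def add_ac)
  show "(\<lambda>j::nat. decay_weight n (int j)) summable_on UNIV"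
    using telescope(1)[OF prems] by simp
  show "(\<Sum>\<^sub>\<infinity>j. decay_weight n (int j)) \<le> 4 * real n"
    using telescope(2)[OF prems] n by (simp add: power2_eq_square)
qed

lemma decay_weight_even: "decay_weight n (- x) = decay_weight n x"
  by (simp add: decay_weight_def)

lemma decay_weight_summable: "n \<ge> 1 \<Longrightarrow> decay_weight n summable_on UNIV"
  by (rule infsum_int_even_le(1)[OF less_imp_le[OF decay_weight_pos] decay_weight_even
        decay_weight_summable_nat(1)])

lemma infsum_decay_weight_le: "n \<ge> 1 \<Longrightarrow> (\<Sum>\<^sub>\<infinity>x. decay_weight n x) \<le> 8 * real n"
  using infsum_int_even_le(2)[OF less_imp_le[OF decay_weight_pos] decay_weight_even
      decay_weight_summable_nat(1)] decay_weight_summable_nat(2)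
  by fastforce

lemma decay_weight_shift:
  assumes "n \<ge> 1"
  shows "(\<lambda>x. decay_weight n (x + s)) summable_on UNIV"
    and "(\<Sum>\<^sub>\<infinity>x. decay_weight n (x + s)) \<le> 8 * real n"
proof -
  have shift: "bij_betw (\<lambda>x::int. x + s) UNIV UNIV"
    by (rule bij_betwI[of _ _ _ "\<lambda>x. x - s"]) auto
  show "(\<lambda>x. decay_weight n (x + s)) summable_on UNIV"
    using summable_on_reindex_bij_betw[OF shift, of "decay_weight n"] decay_weight_summable[OF assms]
    by simp
  show "(\<Sum>\<^sub>\<infinity>x. decay_weight n (x + s)) \<le> 8 * real n"
    using infsum_reindex_bij_betw[OF shift, of "decay_weight n"] infsum_decay_weight_le[OF assms]
    by simp
qed

section \<open>Negligible error families\<close>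

definition negligible_error :: "(nat \<Rightarrow> int \<Rightarrow> real) \<Rightarrow> bool" where
  "negligible_error B \<longleftrightarrow>
     (\<forall>n\<ge>1. \<forall>x. 0 \<le> B n x) \<and> (\<exists>C. \<forall>n\<ge>1. \<forall>x. B n x \<le> C) \<and>
     (\<forall>n\<ge>1. B n summable_on UNIV) \<and> ((\<lambda>n. 1 / real n * (\<Sum>\<^sub>\<infinity>x. B n x)) \<longlonglongrightarrow> 0)"

lemma negligible_errorI:
  assumes nonneg: "\<And>n x. n \<ge> 1 \<Longrightarrow> 0 \<le> B n x"
    and bounded: "\<And>n x. n \<ge> 1 \<Longrightarrow> B n x \<le> C"
    and summable: "\<And>n. n \<ge> 1 \<Longrightarrow> B n summable_on UNIV"
    and sum_le: "\<And>n. n \<ge> 1 \<Longrightarrow> (\<Sum>\<^sub>\<infinity>x. B n x) \<le> real n * \<epsilon> n"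
    and \<epsilon>: "\<epsilon> \<longlonglongrightarrow> 0"
  shows "negligible_error B"
proof -
  have "(\<lambda>n. 1 / real n * (\<Sum>\<^sub>\<infinity>x. B n x)) \<longlonglongrightarrow> 0"
  proof (rule tendsto_sandwich[of "\<lambda>_. 0" _ _ \<epsilon>])
    show "\<forall>\<^sub>F n in sequentially. 0 \<le> 1 / real n * (\<Sum>\<^sub>\<infinity>x. B n x)"
      by (rule eventually_sequentiallyI[of 1]) (simp add: infsum_nonneg nonneg)
    show "\<forall>\<^sub>F n in sequentially. 1 / real n * (\<Sum>\<^sub>\<infinity>x. B n x) \<le> \<epsilon> n"
      by (rule eventually_sequentiallyI[of 1]) (use sum_le in \<open>force simp: field_simps\<close>)
  qed (simp_all add: \<epsilon>)
  then show ?thesis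
    unfolding negligible_error_def using nonneg bounded summable by blast
qed

lemma negligible_error_add:
  assumes B1: "negligible_error B1" and B2: "negligible_error B2"
  shows "negligible_error (\<lambda>n x. B1 n x + B2 n x)"
proof -
  obtain C1 where C1: "\<And>n x. n \<ge> 1 \<Longrightarrow> B1 n x \<le> C1"
    using B1 unfolding negligible_error_def by blast
  obtain C2 where C2: "\<And>n x. n \<ge> 1 \<Longrightarrow> B2 n x \<le> C2"
    using B2 unfolding negligible_error_def by blast
  have s1: "B1 n summable_on UNIV" and s2: "B2 n summable_on UNIV" if "n \<ge> 1" for n
    using B1 B2 that unfolding negligible_error_def by blast+
  define \<epsilon> where "\<epsilon> n = 1 / real n * (\<Sum>\<^sub>\<infinity>x. B1 n x) + 1 / real n * (\<Sum>\<^sub>\<infinity>x. B2 n x)" for n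
  show ?thesis
  proof (rule negligible_errorI[where C = "C1 + C2" and \<epsilon> = \<epsilon>])
    fix n :: nat and x
    assume n: "n \<ge> 1"
    show "0 \<le> B1 n x + B2 n x"
      using B1 B2 n unfolding negligible_error_def by (simp add: add_nonneg_nonneg)
    show "B1 n x + B2 n x \<le> C1 + C2"
      using C1[OF n] C2[OF n] by (rule add_mono)
    show "(\<lambda>x. B1 n x + B2 n x) summable_on UNIV"
      using s1[OF n] s2[OF n] by (rule summable_on_add)
    show "(\<Sum>\<^sub>\<infinity>x. B1 n x + B2 n x) \<le> real n * \<epsilon> n"
      using n by (simp add: infsum_add[OF s1[OF n] s2[OF n]] \<epsilon>_def distrib_left)
  next
    show "\<epsilon> \<longlonglongrightarrow> 0"
      using tendsto_add[of _ 0 _ _ 0] B1 B2 unfolding negligible_error_def \<epsilon>_def[abs_def] by fastforce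
  qed
qed

lemma negligible_error_reflect:
  assumes "negligible_error B"
  shows "negligible_error (\<lambda>n x. B n (- x))"
proof -
  have neg: "bij_betw (\<lambda>x::int. - x) UNIV UNIV"
    by (rule bij_betwI[of _ _ _ "\<lambda>x. - x"]) auto
  have summable: "(\<lambda>x. B n (- x)) summable_on UNIV \<longleftrightarrow> B n summable_on UNIV"
    and infsum: "(\<Sum>\<^sub>\<infinity>x. B n (- x)) = (\<Sum>\<^sub>\<infinity>x. B n x)" for n
    using summable_on_reindex_bij_betw[OF neg, of "B n"] infsum_reindex_bij_betw[OF neg, of "B n"]
    by simp_all
  show ?thesis
    using assms unfolding negligible_error_def summable infsum by blast
qed

lemma negligible_error_dominated:
  assumes nonneg: "\<And>n x. n \<ge> 1 \<Longrightarrow> 0 \<le> E n x"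
    and le: "\<And>n x. n \<ge> 1 \<Longrightarrow> E n x \<le> B n x"
    and B: "negligible_error B"
  shows "negligible_error E"
proof -
  obtain C where C: "\<And>n x. n \<ge> 1 \<Longrightarrow> B n x \<le> C"
    using B unfolding negligible_error_def by blast
  have E: "E n summable_on UNIV" if "n \<ge> 1" for n
    using B that nonneg le unfolding negligible_error_def
    by (blast intro: summable_on_comparison_test)
  show ?thesis
  proof (rule negligible_errorI[where \<epsilon> = "\<lambda>n. 1 / real n * (\<Sum>\<^sub>\<infinity>x. B n x)"])
    fix n :: nat
    assume n: "n \<ge> 1"
    have "B n summable_on UNIV"
      using B n unfolding negligible_error_def by blast
    with E[OF n] have "(\<Sum>\<^sub>\<infinity>x. E n x) \<le> (\<Sum>\<^sub>\<infinity>x. B n x)"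
      by (rule infsum_mono) (rule le[OF n])
    then show "(\<Sum>\<^sub>\<infinity>x. E n x) \<le> real n * (1 / real n * (\<Sum>\<^sub>\<infinity>x. B n x))"
      using n by simp
  next
    fix n :: nat and x
    assume n: "n \<ge> 1"
    show "E n x \<le> C"
      using le[OF n] C[OF n] by (rule order_trans)
  next
    show "(\<lambda>n. 1 / real n * (\<Sum>\<^sub>\<infinity>x. B n x)) \<longlonglongrightarrow> 0"
      using B unfolding negligible_error_def by blast
  qed (use nonneg E in auto)
qed

lemma negligible_error_decay_profile:
  assumes a: "a \<longlonglongrightarrow> 0" and M: "0 \<le> M" and f: "\<And>v. \<bar>f v\<bar> \<le> M / (1 + v^2)"
  shows "negligible_error (\<lambda>n x. \<bar>a n\<bar> * \<bar>f (real_of_int x / real n)\<bar>)"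
proof -
  obtain A where A: "\<And>n. \<bar>a n\<bar> \<le> A"
    using convergent_abs_bounded[OF convergentI[OF a]] by blast
  have f_weight: "\<bar>f (real_of_int x / real n)\<bar> \<le> M * decay_weight n x" for n x
    using f[of "real_of_int x / real n"] by (simp add: decay_weight_def)
  have le: "\<bar>a n\<bar> * \<bar>f (real_of_int x / real n)\<bar> \<le> \<bar>a n\<bar> * M * decay_weight n x" for n x
    using mult_left_mono[OF f_weight abs_ge_zero] by (simp add: mult.assoc)
  have summable: "(\<lambda>x. \<bar>a n\<bar> * \<bar>f (real_of_int x / real n)\<bar>) summable_on UNIV" if "n \<ge> 1" for n
    by (rule summable_on_comparison_test[OF summable_on_cmult_right[OF decay_weight_summable[OF that]] le])
      simp
  show ?thesis
  proof (rule negligible_errorI[where C = "A * M" and \<epsilon> = "\<lambda>n. 8 * M * \<bar>a n\<bar>"])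
    fix n :: nat and x
    have "\<bar>f (real_of_int x / real n)\<bar> \<le> M"
      using f_weight[of x n] mult_left_le[OF decay_weight_le_1 M, of n x] by linarith
    then show "\<bar>a n\<bar> * \<bar>f (real_of_int x / real n)\<bar> \<le> A * M"
      using A[of n] by (intro mult_mono) auto
  next
    fix n :: nat
    assume n: "n \<ge> 1"
    have "(\<Sum>\<^sub>\<infinity>x. \<bar>a n\<bar> * \<bar>f (real_of_int x / real n)\<bar>) \<le> (\<Sum>\<^sub>\<infinity>x. \<bar>a n\<bar> * M * decay_weight n x)"
      using summable[OF n] summable_on_cmult_right[OF decay_weight_summable[OF n]] le
      by (rule infsum_mono)
    also have "\<dots> \<le> \<bar>a n\<bar> * M * (8 * real n)"
      using infsum_decay_weight_le[OF n] M by (simp add: infsum_cmult_right' mult_left_mono)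
    finally show "(\<Sum>\<^sub>\<infinity>x. \<bar>a n\<bar> * \<bar>f (real_of_int x / real n)\<bar>) \<le> real n * (8 * M * \<bar>a n\<bar>)"
      by (simp add: algebra_simps)
  next
    show "(\<lambda>n. 8 * M * \<bar>a n\<bar>) \<longlonglongrightarrow> 0"
      using tendsto_mult_right_zero[OF tendsto_rabs_zero[OF a], of "8 * M"] .
  qed (use summable in auto)
qed

lemma infsum_weighted_swap_le:
  fixes w :: "'k \<Rightarrow> real" and e :: "'x \<Rightarrow> 'k \<Rightarrow> real"
  assumes w0: "\<And>k. k \<in> K \<Longrightarrow> 0 \<le> w k" and e0: "\<And>x k. k \<in> K \<Longrightarrow> 0 \<le> e x k"
    and e_summable: "\<And>k. k \<in> K \<Longrightarrow> (\<lambda>x. e x k) summable_on UNIV"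
    and e_sum_le: "\<And>k. k \<in> K \<Longrightarrow> (\<Sum>\<^sub>\<infinity>x. e x k) \<le> S k"
    and wS: "(\<lambda>k. w k * S k) summable_on K"
  shows "(\<lambda>x. \<Sum>\<^sub>\<infinity>k\<in>K. w k * e x k) summable_on UNIV"
    and "(\<Sum>\<^sub>\<infinity>x. \<Sum>\<^sub>\<infinity>k\<in>K. w k * e x k) \<le> (\<Sum>\<^sub>\<infinity>k\<in>K. w k * S k)"
proof -
  define f where "f k x = w k * e x k" for k x
  have f0: "0 \<le> f k x" if "k \<in> K" for k x
    using w0[OF that] e0[OF that] by (simp add: f_def)
  have f_summable: "f k summable_on UNIV" if "k \<in> K" for k
    unfolding f_def by (intro summable_on_cmult_right e_summable that)
  have f_sum: "infsum (f k) UNIV \<le> w k * S k" if "k \<in> K" for k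
    unfolding f_def infsum_cmult_right' using e_sum_le[OF that] w0[OF that] by (rule mult_left_mono)
  have summable: "(\<lambda>k. infsum (f k) UNIV) summable_on K"
    by (rule summable_on_comparison_test[OF wS f_sum]) (use f0 in \<open>auto intro: infsum_nonneg\<close>)
  note swap = infsum_swap_nonneg[of K UNIV f, OF f0 f_summable summable]
  show "(\<lambda>x. \<Sum>\<^sub>\<infinity>k\<in>K. w k * e x k) summable_on UNIV"
    using swap(1) by (simp add: f_def)
  have "(\<Sum>\<^sub>\<infinity>x. \<Sum>\<^sub>\<infinity>k\<in>K. w k * e x k) = (\<Sum>\<^sub>\<infinity>k\<in>K. infsum (f k) UNIV)"
    using swap(2) by (simp add: f_def)
  also have "\<dots> \<le> (\<Sum>\<^sub>\<infinity>k\<in>K. w k * S k)"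
    using summable wS f_sum by (rule infsum_mono)
  finally show "(\<Sum>\<^sub>\<infinity>x. \<Sum>\<^sub>\<infinity>k\<in>K. w k * e x k) \<le> (\<Sum>\<^sub>\<infinity>k\<in>K. w k * S k)" .
qed

lemma negligible_error_weighted_sum:
  fixes w :: "'k \<Rightarrow> real" and c :: "nat \<Rightarrow> real" and e :: "nat \<Rightarrow> int \<Rightarrow> 'k \<Rightarrow> real"
    and s S :: "nat \<Rightarrow> 'k \<Rightarrow> real"
  assumes w0: "\<And>k. k \<in> K \<Longrightarrow> 0 \<le> w k" and c0: "\<And>n. 0 \<le> c n"
    and e0: "\<And>n x k. n \<ge> 1 \<Longrightarrow> k \<in> K \<Longrightarrow> 0 \<le> e n x k"
    and e_le: "\<And>n x k. n \<ge> 1 \<Longrightarrow> k \<in> K \<Longrightarrow> e n x k \<le> s n k"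
    and e_summable: "\<And>n k. n \<ge> 1 \<Longrightarrow> k \<in> K \<Longrightarrow> (\<lambda>x. e n x k) summable_on UNIV"
    and e_sum_le: "\<And>n k. n \<ge> 1 \<Longrightarrow> k \<in> K \<Longrightarrow> (\<Sum>\<^sub>\<infinity>x. e n x k) \<le> S n k"
    and ws: "\<And>n. n \<ge> 1 \<Longrightarrow> (\<lambda>k. w k * s n k) summable_on K"
    and wS: "\<And>n. n \<ge> 1 \<Longrightarrow> (\<lambda>k. w k * S n k) summable_on K"
    and sup: "convergent (\<lambda>n. c n * (\<Sum>\<^sub>\<infinity>k\<in>K. w k * s n k))"
    and mean: "(\<lambda>n. c n * (\<Sum>\<^sub>\<infinity>k\<in>K. w k * S n k) / real n) \<longlonglongrightarrow> 0"
  shows "negligible_error (\<lambda>n x. c n * (\<Sum>\<^sub>\<infinity>k\<in>K. w k * e n x k))"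
proof -
  obtain C where C: "\<And>n. \<bar>c n * (\<Sum>\<^sub>\<infinity>k\<in>K. w k * s n k)\<bar> \<le> C"
    using convergent_abs_bounded[OF sup] by blast
  have we0: "0 \<le> w k * e n x k" and we_le: "w k * e n x k \<le> w k * s n k"
    if "n \<ge> 1" "k \<in> K" for n x k
    using w0[OF that(2)] e0[OF that] e_le[OF that] by (simp_all add: mult_left_mono)
  have we: "(\<lambda>k. w k * e n x k) summable_on K" if "n \<ge> 1" for n x
    by (rule summable_on_comparison_test[OF ws[OF that]]) (use we0 we_le that in auto)
  show ?thesis
  proof (rule negligible_errorI[where C = C and \<epsilon> = "\<lambda>n. c n * (\<Sum>\<^sub>\<infinity>k\<in>K. w k * S n k) / real n"])
    fix n :: nat and x :: int
    assume n: "n \<ge> 1"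
    show "0 \<le> c n * (\<Sum>\<^sub>\<infinity>k\<in>K. w k * e n x k)"
      using c0 we0[OF n] by (simp add: infsum_nonneg)
    have "(\<Sum>\<^sub>\<infinity>k\<in>K. w k * e n x k) \<le> (\<Sum>\<^sub>\<infinity>k\<in>K. w k * s n k)"
      using we[OF n] ws[OF n] by (rule infsum_mono) (rule we_le[OF n])
    then have "c n * (\<Sum>\<^sub>\<infinity>k\<in>K. w k * e n x k) \<le> c n * (\<Sum>\<^sub>\<infinity>k\<in>K. w k * s n k)"
      by (rule mult_left_mono[OF _ c0])
    then show "c n * (\<Sum>\<^sub>\<infinity>k\<in>K. w k * e n x k) \<le> C"
      using C[of n] by linarith
  next
    fix n :: nat
    assume n: "n \<ge> 1"
    note swap = infsum_weighted_swap_le[of K w "\<lambda>x k. e n x k" "S n",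
        OF w0 e0[OF n] e_summable[OF n] e_sum_le[OF n] wS[OF n]]
    show "(\<lambda>x. c n * (\<Sum>\<^sub>\<infinity>k\<in>K. w k * e n x k)) summable_on UNIV"
      by (rule summable_on_cmult_right[OF swap(1)])
    show "(\<Sum>\<^sub>\<infinity>x. c n * (\<Sum>\<^sub>\<infinity>k\<in>K. w k * e n x k))
        \<le> real n * (c n * (\<Sum>\<^sub>\<infinity>k\<in>K. w k * S n k) / real n)"
      using mult_left_mono[OF swap(2) c0] n by (simp add: infsum_cmult_right')
  qed (rule mean)
qed

section \<open>Error bounds for the rescaled generator\<close>

definition kernel_avg :: "real \<Rightarrow> (nat \<Rightarrow> int \<Rightarrow> nat \<Rightarrow> real) \<Rightarrow> nat \<Rightarrow> int \<Rightarrow> real" where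
  "kernel_avg \<gamma> e n x = Theta_ratio \<gamma> n * (\<Sum>\<^sub>\<infinity>k\<in>{1..}. pker \<gamma> (int k) * e n x k)"

text \<open>
  Per-jump bounds for \<open>n\<^sup>2\<close> times an increment minus its Taylor term \<open>k\<^sup>2 H''(x/n)\<close>:
  \<open>bulk_bound\<close> covers second differences (third-order Taylor error for \<open>k \<le> n\<close>, decay of \<open>H\<close>
  for longer jumps), \<open>boundary_bound\<close> the extra cost of a one-sided remainder, which only
  occurs for jumps reaching past the origin.
\<close>

definition bulk_bound :: "real \<Rightarrow> nat \<Rightarrow> int \<Rightarrow> nat \<Rightarrow> real" where
  "bulk_bound M n x k =
     (if k \<le> n then real k ^ 3 / real n * M * decay_weight n x
      else real n ^ 2 * M * (decay_weight n (x + int k) + decay_weight n (x - int k) + 2 * decay_weight n x))"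

definition boundary_bound :: "real \<Rightarrow> real \<Rightarrow> nat \<Rightarrow> int \<Rightarrow> nat \<Rightarrow> real" where
  "boundary_bound M D n x k =
     (if 0 \<le> x \<and> x \<le> int k then (if k \<le> n then 5 / 2 * M * real k ^ 2 else real n * real k * \<bar>D\<bar>) else 0)"

lemma bulk_bound_nonneg: "0 \<le> M \<Longrightarrow> 0 \<le> bulk_bound M n x k"
  unfolding bulk_bound_def using decay_weight_pos
  by (simp add: less_imp_le add_nonneg_nonneg)

lemma bulk_bound_le:
  assumes M: "0 \<le> M"
  shows "bulk_bound M n x k \<le> (if k \<le> n then M / real n * real k ^ 3 else 4 * M * real n ^ 2 * real k ^ 0)"
proof (cases "k \<le> n")
  case True
  have "real k ^ 3 / real n * M * decay_weight n x \<le> real k ^ 3 / real n * M"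
    using M by (intro mult_left_le decay_weight_le_1) simp
  then show ?thesis
    using True by (simp add: bulk_bound_def mult_ac)
next
  case False
  have "decay_weight n (x + int k) + decay_weight n (x - int k) + 2 * decay_weight n x \<le> 4"
    using decay_weight_le_1[of n] by (smt (verit))
  then have "real n ^ 2 * M * (decay_weight n (x + int k) + decay_weight n (x - int k) + 2 * decay_weight n x)
      \<le> real n ^ 2 * M * 4"
    using M by (intro mult_left_mono) auto
  then show ?thesis
    using False by (simp add: bulk_bound_def mult_ac)
qed

lemma decay_weight_shifts:
  assumes "n \<ge> 1"
  shows "(\<lambda>x. decay_weight n (x + int k) + decay_weight n (x - int k) + 2 * decay_weight n x) summable_on UNIV"
    and "(\<Sum>\<^sub>\<infinity>x. decay_weight n (x + int k) + decay_weight n (x - int k) + 2 * decay_weight n x) \<le> 32 * real n"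
proof -
  note W = decay_weight_summable[OF assms] decay_weight_shift(1)[OF assms]
  show "(\<lambda>x. decay_weight n (x + int k) + decay_weight n (x - int k) + 2 * decay_weight n x) summable_on UNIV"
    using W(2)[of "- int k"] by (intro summable_on_add summable_on_cmult_right W) simp
  have "(\<Sum>\<^sub>\<infinity>x. decay_weight n (x + int k) + decay_weight n (x - int k) + 2 * decay_weight n x)
      = (\<Sum>\<^sub>\<infinity>x. decay_weight n (x + int k)) + (\<Sum>\<^sub>\<infinity>x. decay_weight n (x + - int k))
        + 2 * (\<Sum>\<^sub>\<infinity>x. decay_weight n x)"
    using W(2)[of "- int k"] W(2)[of "int k"] W(1)
    by (simp add: infsum_add summable_on_add summable_on_cmult_right infsum_cmult_right')
  also have "\<dots> \<le> 8 * real n + 8 * real n + 2 * (8 * real n)"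
    using decay_weight_shift(2)[OF assms, of "int k"] decay_weight_shift(2)[OF assms, of "- int k"]
      infsum_decay_weight_le[OF assms]
    by linarith
  finally show "(\<Sum>\<^sub>\<infinity>x. decay_weight n (x + int k) + decay_weight n (x - int k) + 2 * decay_weight n x)
      \<le> 32 * real n"
    by simp
qed

lemma bulk_bound_summable_x:
  assumes "n \<ge> 1"
  shows "(\<lambda>x. bulk_bound M n x k) summable_on UNIV"
    and "0 \<le> M \<Longrightarrow> (\<Sum>\<^sub>\<infinity>x. bulk_bound M n x k)
      \<le> (if k \<le> n then 8 * M * real k ^ 3 else 32 * M * real n ^ 3 * real k ^ 0)"
proof -
  show "(\<lambda>x. bulk_bound M n x k) summable_on UNIV"
  proof (cases "k \<le> n")
    case True
    then show ?thesis
      unfolding bulk_bound_def if_P[OF True]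
      by (intro summable_on_cmult_right decay_weight_summable assms)
  next
    case False
    then show ?thesis
      unfolding bulk_bound_def if_not_P[OF False]
      by (intro summable_on_cmult_right decay_weight_shifts(1) assms)
  qed
  assume M: "0 \<le> M"
  show "(\<Sum>\<^sub>\<infinity>x. bulk_bound M n x k)
      \<le> (if k \<le> n then 8 * M * real k ^ 3 else 32 * M * real n ^ 3 * real k ^ 0)"
  proof (cases "k \<le> n")
    case True
    have "(\<Sum>\<^sub>\<infinity>x. bulk_bound M n x k) = real k ^ 3 / real n * M * (\<Sum>\<^sub>\<infinity>x. decay_weight n x)"
      using True by (simp add: bulk_bound_def infsum_cmult_right' flip: times_divide_eq_left)
    also have "\<dots> \<le> real k ^ 3 / real n * M * (8 * real n)"
      using infsum_decay_weight_le[OF assms] M by (intro mult_left_mono) auto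
    finally show ?thesis
      using True assms by (simp add: mult_ac)
  next
    case False
    have "(\<Sum>\<^sub>\<infinity>x. bulk_bound M n x k) \<le> real n ^ 2 * M * (32 * real n)"
      using False M decay_weight_shifts(2)[OF assms, of k]
      by (simp add: bulk_bound_def infsum_cmult_right' mult_left_mono)
    then show ?thesis
      using False by (simp add: power2_eq_square power3_eq_cube mult_ac)
  qed
qed

lemma boundary_bound_nonneg: "0 \<le> M \<Longrightarrow> 0 \<le> boundary_bound M D n x k"
  unfolding boundary_bound_def by simp

lemma boundary_bound_le:
  assumes "0 \<le> M"
  shows "boundary_bound M D n x k \<le> (if k \<le> n then 5 / 2 * M * real k ^ 2 else \<bar>D\<bar> * real k ^ 2)"
proof (cases "k \<le> n")
  case False
  then have "real n \<le> real k"
    by simp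
  from mult_right_mono[OF mult_right_mono[OF this, of "real k"], of "\<bar>D\<bar>"]
  have "real n * real k * \<bar>D\<bar> \<le> \<bar>D\<bar> * real k ^ 2"
    by (simp add: power2_eq_square mult_ac)
  then show ?thesis
    using False by (simp add: boundary_bound_def)
qed (use assms in \<open>simp add: boundary_bound_def\<close>)

lemma boundary_bound_summable_x:
  assumes k: "k \<ge> 1"
  shows "(\<lambda>x. boundary_bound M D n x k) summable_on UNIV"
    and "0 \<le> M \<Longrightarrow> (\<Sum>\<^sub>\<infinity>x. boundary_bound M D n x k)
      \<le> (if k \<le> n then 5 * M * real k ^ 3 else 2 * real n * \<bar>D\<bar> * real k ^ 2)"
proof -
  define c where "c = (if k \<le> n then 5 / 2 * M * real k ^ 2 else real n * real k * \<bar>D\<bar>)"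
  have eq: "boundary_bound M D n x k = (if x \<in> {0..int k} then c else 0)" for x
    by (simp add: boundary_bound_def c_def)
  show "(\<lambda>x. boundary_bound M D n x k) summable_on UNIV"
    unfolding eq by (rule finite_nonzero_values_imp_summable_on) (auto intro: finite_subset)
  assume M: "0 \<le> M"
  have "(\<Sum>\<^sub>\<infinity>x. boundary_bound M D n x k) = (\<Sum>\<^sub>\<infinity>x\<in>{0..int k}. c)"
    unfolding eq by (rule infsum_cong_neutral) auto
  also have "\<dots> = (real k + 1) * c"
    by (simp add: infsum_finite)
  also have "\<dots> \<le> (2 * real k) * c"
    using k M by (intro mult_right_mono) (auto simp: c_def)
  finally show "(\<Sum>\<^sub>\<infinity>x. boundary_bound M D n x k)
      \<le> (if k \<le> n then 5 * M * real k ^ 3 else 2 * real n * \<bar>D\<bar> * real k ^ 2)"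
    by (cases "k \<le> n") (simp_all add: c_def power2_eq_square power3_eq_cube mult_ac)
qed

lemma negligible_kernel_avg_bulk:
  assumes \<gamma>: "\<gamma> \<ge> 2" and M: "0 \<le> M"
  shows "negligible_error (kernel_avg \<gamma> (bulk_bound M))"
proof -
  have \<gamma>0: "\<gamma> > 0"
    using \<gamma> by simp
  define s where "s n k = (if k \<le> n then M / real n * real k ^ 3 else 4 * M * real n ^ 2 * real k ^ 0)"
    for n k :: nat
  define S where "S n k = (if k \<le> n then 8 * M * real k ^ 3 else 32 * M * real n ^ 3 * real k ^ 0)"
    for n k :: nat
  have ws: "(\<lambda>k. pker \<gamma> (int k) * s n k) summable_on {1..}"
    and iws: "(\<Sum>\<^sub>\<infinity>k\<in>{1..}. pker \<gamma> (int k) * s n k)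
      = M / real n * moment_upto \<gamma> 3 n + 4 * M * real n ^ 2 * moment_tail \<gamma> 0 n" for n
    unfolding s_def using pker_piecewise_moments[OF \<gamma>0] \<gamma>0 by auto
  have wS: "(\<lambda>k. pker \<gamma> (int k) * S n k) summable_on {1..}"
    and iwS: "(\<Sum>\<^sub>\<infinity>k\<in>{1..}. pker \<gamma> (int k) * S n k)
      = 8 * M * moment_upto \<gamma> 3 n + 32 * M * real n ^ 3 * moment_tail \<gamma> 0 n" for n
    unfolding S_def using pker_piecewise_moments[OF \<gamma>0] \<gamma>0 by auto
  have lim: "(\<lambda>n. M * (Theta_ratio \<gamma> n * moment_upto \<gamma> 3 n / real n)
      + 4 * M * (Theta_ratio \<gamma> n * real n ^ 2 * moment_tail \<gamma> 0 n)) \<longlonglongrightarrow> M * 0 + 4 * M * 0"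
    by (intro tendsto_intros moment_upto_3_negligible moment_tail_0_negligible \<gamma>)
  have "(\<lambda>n. Theta_ratio \<gamma> n * (\<Sum>\<^sub>\<infinity>k\<in>{1..}. pker \<gamma> (int k) * s n k)) \<longlonglongrightarrow> 0"
    using lim unfolding iws by (simp add: algebra_simps)
  moreover have "\<forall>\<^sub>F n in sequentially. 8 * (Theta_ratio \<gamma> n * (\<Sum>\<^sub>\<infinity>k\<in>{1..}. pker \<gamma> (int k) * s n k))
      = Theta_ratio \<gamma> n * (\<Sum>\<^sub>\<infinity>k\<in>{1..}. pker \<gamma> (int k) * S n k) / real n"
    by (intro eventually_sequentiallyI[of 1])
      (unfold iws iwS, simp add: field_simps power2_eq_square power3_eq_cube)
  ultimately have mean: "(\<lambda>n. Theta_ratio \<gamma> n * (\<Sum>\<^sub>\<infinity>k\<in>{1..}. pker \<gamma> (int k) * S n k) / real n) \<longlonglongrightarrow> 0"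
    using tendsto_mult_right_zero[of _ sequentially 8] tendsto_cong by fastforce
  show ?thesis
    unfolding kernel_avg_def[abs_def]
  proof (rule negligible_error_weighted_sum[where s = s and S = S])
    show "convergent (\<lambda>n. Theta_ratio \<gamma> n * (\<Sum>\<^sub>\<infinity>k\<in>{1..}. pker \<gamma> (int k) * s n k))"
      using \<open>(\<lambda>n. Theta_ratio \<gamma> n * _) \<longlonglongrightarrow> 0\<close> by (rule convergentI)
  qed (use \<gamma>0 M ws wS mean in \<open>auto simp: pker_nonneg Theta_ratio_nonneg bulk_bound_nonneg
        bulk_bound_le s_def S_def bulk_bound_summable_x\<close>)
qed

lemma negligible_kernel_avg_boundary:
  assumes \<gamma>: "\<gamma> \<ge> 2" and M: "0 \<le> M" and D: "\<gamma> > 2 \<or> D = 0"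
  shows "negligible_error (kernel_avg \<gamma> (boundary_bound M D))"
proof -
  have \<gamma>0: "\<gamma> > 0"
    using \<gamma> by simp
  have tail: "\<bar>D\<bar> = 0 \<or> real 2 < \<gamma>"
    using D by auto
  define s where "s n k = (if k \<le> n then 5 / 2 * M * real k ^ 2 else \<bar>D\<bar> * real k ^ 2)" for n k :: nat
  define S where "S n k = (if k \<le> n then 5 * M * real k ^ 3 else 2 * real n * \<bar>D\<bar> * real k ^ 2)"
    for n k :: nat
  have ws: "(\<lambda>k. pker \<gamma> (int k) * s n k) summable_on {1..}"
    and iws: "(\<Sum>\<^sub>\<infinity>k\<in>{1..}. pker \<gamma> (int k) * s n k)
      = 5 / 2 * M * moment_upto \<gamma> 2 n + \<bar>D\<bar> * moment_tail \<gamma> 2 n" for n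
    unfolding s_def using pker_piecewise_moments[OF \<gamma>0 tail] by auto
  have wS: "(\<lambda>k. pker \<gamma> (int k) * S n k) summable_on {1..}"
    and iwS: "(\<Sum>\<^sub>\<infinity>k\<in>{1..}. pker \<gamma> (int k) * S n k)
      = 5 * M * moment_upto \<gamma> 3 n + 2 * real n * \<bar>D\<bar> * moment_tail \<gamma> 2 n" for n
    unfolding S_def using pker_piecewise_moments[OF \<gamma>0] tail by auto
  note slope = slope_moment_tail_tendsto_0[OF D]
  have "(\<lambda>n. 5 / 2 * M * (Theta_ratio \<gamma> n * moment_upto \<gamma> 2 n)
      + \<bar>D\<bar> * (Theta_ratio \<gamma> n * moment_tail \<gamma> 2 n)) \<longlonglongrightarrow> 5 / 2 * M * kappa \<gamma> + 0"
    by (intro tendsto_intros Theta_ratio_moment_upto_2_tendsto_kappa \<gamma> slope)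
  then have sup: "convergent (\<lambda>n. Theta_ratio \<gamma> n * (\<Sum>\<^sub>\<infinity>k\<in>{1..}. pker \<gamma> (int k) * s n k))"
    unfolding iws by (intro convergentI) (simp add: algebra_simps)
  have "(\<lambda>n. 5 * M * (Theta_ratio \<gamma> n * moment_upto \<gamma> 3 n / real n)
      + 2 * (\<bar>D\<bar> * (Theta_ratio \<gamma> n * moment_tail \<gamma> 2 n))) \<longlonglongrightarrow> 5 * M * 0 + 2 * 0"
    by (intro tendsto_intros moment_upto_3_negligible \<gamma> slope)
  moreover have "\<forall>\<^sub>F n in sequentially. 5 * M * (Theta_ratio \<gamma> n * moment_upto \<gamma> 3 n / real n)
      + 2 * (\<bar>D\<bar> * (Theta_ratio \<gamma> n * moment_tail \<gamma> 2 n))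
      = Theta_ratio \<gamma> n * (\<Sum>\<^sub>\<infinity>k\<in>{1..}. pker \<gamma> (int k) * S n k) / real n"
    by (intro eventually_sequentiallyI[of 1]) (unfold iwS, simp add: field_simps)
  ultimately have mean: "(\<lambda>n. Theta_ratio \<gamma> n * (\<Sum>\<^sub>\<infinity>k\<in>{1..}. pker \<gamma> (int k) * S n k) / real n) \<longlonglongrightarrow> 0"
    by (simp add: tendsto_cong)
  show ?thesis
    unfolding kernel_avg_def[abs_def]
    by (rule negligible_error_weighted_sum[where s = s and S = S])
      (use \<gamma>0 M ws wS sup mean in \<open>auto simp: pker_nonneg Theta_ratio_nonneg boundary_bound_nonneg
        boundary_bound_le s_def S_def boundary_bound_summable_x\<close>)
qed

lemma bulk_bound_pker_summable:
  assumes "\<gamma> \<ge> 2" and "0 \<le> M"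
  shows "(\<lambda>k. pker \<gamma> (int k) * bulk_bound M n x k) summable_on {1..}"
proof (rule summable_on_comparison_test)
  show "(\<lambda>k. pker \<gamma> (int k) * (if k \<le> n then M / real n * real k ^ 3 else 4 * M * real n ^ 2 * real k ^ 0))
      summable_on {1..}"
    using assms by (intro pker_piecewise_moments(1)) auto
next
  fix k :: nat
  have "0 \<le> pker \<gamma> (int k)"
    using assms(1) by (simp add: pker_nonneg)
  then show "pker \<gamma> (int k) * bulk_bound M n x k
      \<le> pker \<gamma> (int k) * (if k \<le> n then M / real n * real k ^ 3 else 4 * M * real n ^ 2 * real k ^ 0)"
    and "0 \<le> pker \<gamma> (int k) * bulk_bound M n x k"
    using assms(2) by (simp_all add: mult_left_mono bulk_bound_le bulk_bound_nonneg)
qed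

lemma boundary_bound_pker_summable:
  assumes "\<gamma> \<ge> 2" and "0 \<le> M" and "\<gamma> > 2 \<or> D = 0"
  shows "(\<lambda>k. pker \<gamma> (int k) * boundary_bound M D n x k) summable_on {1..}"
proof (rule summable_on_comparison_test)
  show "(\<lambda>k. pker \<gamma> (int k) * (if k \<le> n then 5 / 2 * M * real k ^ 2 else \<bar>D\<bar> * real k ^ 2))
      summable_on {1..}"
    using assms by (intro pker_piecewise_moments(1)) auto
next
  fix k :: nat
  have "0 \<le> pker \<gamma> (int k)"
    using assms(1) by (simp add: pker_nonneg)
  then show "pker \<gamma> (int k) * boundary_bound M D n x k
      \<le> pker \<gamma> (int k) * (if k \<le> n then 5 / 2 * M * real k ^ 2 else \<bar>D\<bar> * real k ^ 2)"
    and "0 \<le> pker \<gamma> (int k) * boundary_bound M D n x k"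
    using assms(2) by (simp_all add: mult_left_mono boundary_bound_le boundary_bound_nonneg)
qed

lemma Theta_kernel_sum_error:
  assumes \<gamma>: "\<gamma> \<ge> 2" and n: "n \<ge> 1"
    and p\<phi>: "(\<lambda>k. pker \<gamma> (int k) * \<phi> k) summable_on {1..}"
    and pb: "(\<lambda>k. pker \<gamma> (int k) * b k) summable_on {1..}"
    and err: "\<And>k. k \<ge> 1 \<Longrightarrow> \<bar>real n ^ 2 * \<phi> k - (if k \<le> n then real k ^ 2 * c else 0)\<bar> \<le> b k"
  shows "\<bar>Theta \<gamma> n * (\<Sum>\<^sub>\<infinity>k\<in>{1..}. pker \<gamma> (int k) * \<phi> k) - kappa \<gamma> * c\<bar>
    \<le> Theta_ratio \<gamma> n * (\<Sum>\<^sub>\<infinity>k\<in>{1..}. pker \<gamma> (int k) * b k)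
      + \<bar>Theta_ratio \<gamma> n * moment_upto \<gamma> 2 n - kappa \<gamma>\<bar> * \<bar>c\<bar>"
proof -
  have \<gamma>0: "\<gamma> > 0"
    using \<gamma> by simp
  define q where "q = (\<lambda>k. pker \<gamma> (int k) * (if k \<le> n then c * real k ^ 2 else 0 * real k ^ 0))"
  have q: "q summable_on {1..}" and iq: "infsum q {1..} = c * moment_upto \<gamma> 2 n"
    using pker_piecewise_moments[OF \<gamma>0, of 0 0 n c 2] by (simp_all add: q_def)
  define g where "g k = real n ^ 2 * (pker \<gamma> (int k) * \<phi> k) - q k" for k
  have g: "g summable_on {1..}"
    unfolding g_def using summable_on_cmult_right[OF p\<phi>] q by (rule summable_on_diff)
  have ig: "infsum g {1..} = real n ^ 2 * (\<Sum>\<^sub>\<infinity>k\<in>{1..}. pker \<gamma> (int k) * \<phi> k) - c * moment_upto \<gamma> 2 n"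
    unfolding g_def infsum_diff[OF summable_on_cmult_right[OF p\<phi>] q] infsum_cmult_right' iq ..
  have gk: "\<bar>g k\<bar> \<le> pker \<gamma> (int k) * b k" if "k \<in> {1..}" for k
  proof -
    have "g k = pker \<gamma> (int k) * (real n ^ 2 * \<phi> k - (if k \<le> n then real k ^ 2 * c else 0))"
      by (simp add: g_def q_def algebra_simps)
    then show ?thesis
      using err[of k] that pker_nonneg[OF \<gamma>0, of "int k"] by (simp add: abs_mult mult_left_mono)
  qed
  have "infsum g {1..} \<le> (\<Sum>\<^sub>\<infinity>k\<in>{1..}. pker \<gamma> (int k) * b k)"
    using g pb by (rule infsum_mono) (use gk in force)
  moreover have "- infsum g {1..} \<le> (\<Sum>\<^sub>\<infinity>k\<in>{1..}. pker \<gamma> (int k) * b k)"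
    unfolding infsum_uminus[symmetric] using summable_on_uminus[THEN iffD2, OF g] pb
    by (rule infsum_mono) (use gk in force)
  ultimately have bound: "\<bar>infsum g {1..}\<bar> \<le> (\<Sum>\<^sub>\<infinity>k\<in>{1..}. pker \<gamma> (int k) * b k)"
    by linarith
  have "Theta \<gamma> n * (\<Sum>\<^sub>\<infinity>k\<in>{1..}. pker \<gamma> (int k) * \<phi> k) - kappa \<gamma> * c
      = Theta_ratio \<gamma> n * infsum g {1..} + (Theta_ratio \<gamma> n * moment_upto \<gamma> 2 n - kappa \<gamma>) * c"
    unfolding ig Theta_eq_Theta_ratio by (simp add: algebra_simps)
  also have "\<bar>\<dots>\<bar> \<le> Theta_ratio \<gamma> n * \<bar>infsum g {1..}\<bar> + \<bar>Theta_ratio \<gamma> n * moment_upto \<gamma> 2 n - kappa \<gamma>\<bar> * \<bar>c\<bar>"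
    using Theta_ratio_nonneg[of \<gamma> n] by (simp add: abs_mult abs_triangle_ineq [THEN order_trans])
  also have "\<dots> \<le> Theta_ratio \<gamma> n * (\<Sum>\<^sub>\<infinity>k\<in>{1..}. pker \<gamma> (int k) * b k)
      + \<bar>Theta_ratio \<gamma> n * moment_upto \<gamma> 2 n - kappa \<gamma>\<bar> * \<bar>c\<bar>"
    using bound Theta_ratio_nonneg[of \<gamma> n] by (simp add: mult_left_mono)
  finally show ?thesis .
qed

definition error_profile :: "real \<Rightarrow> (real \<Rightarrow> real) \<Rightarrow> real \<Rightarrow> real \<Rightarrow> nat \<Rightarrow> int \<Rightarrow> real" where
  "error_profile \<gamma> H2 M D n x =
     kernel_avg \<gamma> (bulk_bound M) n x + kernel_avg \<gamma> (boundary_bound M D) n x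
     + \<bar>Theta_ratio \<gamma> n * moment_upto \<gamma> 2 n - kappa \<gamma>\<bar> * \<bar>H2 (real_of_int x / real n)\<bar>"

context decaying_C3
begin

lemma decay_on_grid: "\<bar>H (real_of_int x / real n)\<bar> \<le> M * decay_weight n x"
  using decay_H[of "real_of_int x / real n"] by (simp add: decay_weight_def)

lemma negligible_error_profile:
  assumes "\<gamma> \<ge> 2" and "\<gamma> > 2 \<or> D = 0"
  shows "negligible_error (error_profile \<gamma> H2 M D)"
proof -
  have "(\<lambda>n. Theta_ratio \<gamma> n * moment_upto \<gamma> 2 n - kappa \<gamma>) \<longlonglongrightarrow> 0"
    using Theta_ratio_moment_upto_2_tendsto_kappa[OF assms(1)] by (simp add: LIM_zero)
  then show ?thesis
    unfolding error_profile_def[abs_def]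
    by (intro negligible_error_add negligible_kernel_avg_bulk negligible_kernel_avg_boundary
        negligible_error_decay_profile[OF _ M_nonneg decay_H2] M_nonneg assms)
qed

lemma error_profile_eq:
  assumes "\<gamma> \<ge> 2" and "\<gamma> > 2 \<or> D = 0"
  shows "error_profile \<gamma> H2 M D n x
    = Theta_ratio \<gamma> n * (\<Sum>\<^sub>\<infinity>k\<in>{1..}. pker \<gamma> (int k) * (bulk_bound M n x k + boundary_bound M D n x k))
      + \<bar>Theta_ratio \<gamma> n * moment_upto \<gamma> 2 n - kappa \<gamma>\<bar> * \<bar>H2 (real_of_int x / real n)\<bar>"
  using bulk_bound_pker_summable[OF assms(1) M_nonneg]
    boundary_bound_pker_summable[OF assms(1) M_nonneg assms(2)]
  by (simp add: error_profile_def kernel_avg_def distrib_left infsum_add)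

lemma second_diff_scaled_error:
  assumes n: "n \<ge> 1"
  shows "\<bar>real n ^ 2 * second_diff H (real_of_int x / real n) (real k / real n)
      - (if k \<le> n then real k ^ 2 * H2 (real_of_int x / real n) else 0)\<bar> \<le> bulk_bound M n x k"
proof -
  define u h where "u = real_of_int x / real n" and "h = real k / real n"
  have nh: "real n * h = real k"
    using n by (simp add: h_def)
  show ?thesis
  proof (cases "k \<le> n")
    case True
    have h: "0 \<le> h" "h \<le> 1"
      using True n by (simp_all add: h_def)
    have "real n ^ 2 * \<bar>second_diff H u h - h^2 * H2 u\<bar> \<le> real n ^ 2 * (h^3 * (M / (1 + u^2)))"
      using second_diff_taylor[OF h, of u] by (rule mult_left_mono) simp
    moreover have "real n ^ 2 * \<bar>second_diff H u h - h^2 * H2 u\<bar>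
        = \<bar>real n ^ 2 * (second_diff H u h - h^2 * H2 u)\<bar>"
      by (simp add: abs_mult)
    moreover have "real n ^ 2 * (second_diff H u h - h^2 * H2 u)
        = real n ^ 2 * second_diff H u h - real k ^ 2 * H2 u"
      by (simp add: right_diff_distrib power_mult_distrib flip: nh)
    moreover have "real n ^ 2 * (h^3 * (M / (1 + u^2))) = real k ^ 3 / real n * M * decay_weight n x"
      using n by (simp add: h_def u_def decay_weight_def power2_eq_square power3_eq_cube)
    ultimately show ?thesis
      using True by (simp add: bulk_bound_def u_def h_def)
  next
    case False
    have "\<bar>second_diff H u h\<bar> \<le> \<bar>H (u + h)\<bar> + \<bar>H (u - h)\<bar> + 2 * \<bar>H u\<bar>"
      unfolding second_diff_def by linarith
    also have "\<dots> \<le> M * decay_weight n (x + int k) + M * decay_weight n (x - int k) + 2 * (M * decay_weight n x)"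
      using decay_on_grid[of "x + int k" n] decay_on_grid[of "x - int k" n] decay_on_grid[of x n]
      by (simp add: u_def h_def add_divide_distrib diff_divide_distrib)
    finally have "real n ^ 2 * \<bar>second_diff H u h\<bar> \<le> real n ^ 2 *
        (M * decay_weight n (x + int k) + M * decay_weight n (x - int k) + 2 * (M * decay_weight n x))"
      by (rule mult_left_mono) simp
    then have "real n ^ 2 * \<bar>second_diff H u h\<bar>
        \<le> real n ^ 2 * M * (decay_weight n (x + int k) + decay_weight n (x - int k) + 2 * decay_weight n x)"
      by (simp add: algebra_simps)
    then show ?thesis
      using False by (simp add: bulk_bound_def u_def h_def abs_mult)
  qed
qed

lemma first_order_rem_short_jump:
  assumes n: "n \<ge> 1" and x: "0 \<le> x" "x \<le> int k" and k: "k \<le> n"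
  shows "\<bar>real n ^ 2 * first_order_rem H (H1 0) (real_of_int x / real n) (real k / real n)
      - real k ^ 2 * H2 (real_of_int x / real n)\<bar> \<le> 5 / 2 * M * real k ^ 2"
proof -
  define u h where "u = real_of_int x / real n" and "h = real k / real n"
  have u: "0 \<le> u" "u \<le> h"
    using x n by (simp_all add: u_def h_def divide_right_mono)
  have "real n ^ 2 * \<bar>first_order_rem H (H1 0) u h\<bar> \<le> real n ^ 2 * (3 / 2 * M * h^2)"
    using first_order_rem_bound[OF u] by (rule mult_left_mono) simp
  also have "\<dots> = 3 / 2 * M * real k ^ 2"
    using n by (simp add: h_def power_divide)
  finally have "\<bar>real n ^ 2 * first_order_rem H (H1 0) u h\<bar> \<le> 3 / 2 * M * real k ^ 2"
    by (simp add: abs_mult)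
  moreover have "\<bar>real k ^ 2 * H2 u\<bar> \<le> M * real k ^ 2"
    using bounded_H2[of u] by (simp add: abs_mult mult.commute mult_right_mono)
  ultimately show ?thesis
    using abs_triangle_ineq4[of "real n ^ 2 * first_order_rem H (H1 0) u h" "real k ^ 2 * H2 u"]
    unfolding u_def h_def by linarith
qed

lemma first_order_rem_long_jump:
  assumes n: "n \<ge> 1"
  shows "real n ^ 2 * \<bar>first_order_rem H (H1 0) (real_of_int x / real n) (real k / real n)\<bar>
    \<le> real n ^ 2 * M * (decay_weight n (x + int k) + decay_weight n x) + real n * real k * \<bar>H1 0\<bar>"
proof -
  define u h where "u = real_of_int x / real n" and "h = real k / real n"
  have "\<bar>H1 0 * h\<bar> = \<bar>H1 0\<bar> * h"
    by (simp add: h_def abs_mult)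
  then have "\<bar>first_order_rem H (H1 0) u h\<bar> \<le> \<bar>H (u + h)\<bar> + \<bar>H u\<bar> + \<bar>H1 0\<bar> * h"
    unfolding first_order_rem_def by arith
  moreover have "\<bar>H (u + h)\<bar> \<le> M * decay_weight n (x + int k)"
    using decay_on_grid[of "x + int k" n] by (simp add: u_def h_def add_divide_distrib)
  moreover have "\<bar>H u\<bar> \<le> M * decay_weight n x"
    using decay_on_grid[of x n] by (simp add: u_def)
  ultimately have "\<bar>first_order_rem H (H1 0) u h\<bar>
      \<le> M * decay_weight n (x + int k) + M * decay_weight n x + \<bar>H1 0\<bar> * h"
    by linarith
  then have "real n ^ 2 * \<bar>first_order_rem H (H1 0) u h\<bar>
      \<le> real n ^ 2 * (M * decay_weight n (x + int k) + M * decay_weight n x + \<bar>H1 0\<bar> * h)"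
    by (rule mult_left_mono) simp
  also have "\<dots> = real n ^ 2 * M * (decay_weight n (x + int k) + decay_weight n x) + real n * real k * \<bar>H1 0\<bar>"
    using n by (simp add: h_def algebra_simps power2_eq_square)
  finally show ?thesis
    by (simp add: u_def h_def)
qed

lemma first_order_rem_scaled_error:
  assumes n: "n \<ge> 1" and x: "0 \<le> x" "x \<le> int k"
  shows "\<bar>real n ^ 2 * first_order_rem H (H1 0) (real_of_int x / real n) (real k / real n)
      - (if k \<le> n then real k ^ 2 * H2 (real_of_int x / real n) else 0)\<bar>
    \<le> bulk_bound M n x k + boundary_bound M (H1 0) n x k"
proof (cases "k \<le> n")
  case True
  then show ?thesis
    using first_order_rem_short_jump[OF n x True] bulk_bound_nonneg[OF M_nonneg, of n x k] x
    by (simp add: boundary_bound_def)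
next
  case False
  have "real n ^ 2 * M * (decay_weight n (x + int k) + decay_weight n x)
      \<le> real n ^ 2 * M * (decay_weight n (x + int k) + decay_weight n (x - int k) + 2 * decay_weight n x)"
    using M_nonneg decay_weight_pos[of n "x - int k"] decay_weight_pos[of n x] by (intro mult_left_mono) auto
  then show ?thesis
    using first_order_rem_long_jump[OF n, of x k] False x
    by (simp add: bulk_bound_def boundary_bound_def abs_mult)
qed

end

section \<open>The generator as a sum over jump lengths\<close>

lemma Kop_symmetric_eq:
  assumes \<beta>: "\<beta> < 1" and \<gamma>: "\<gamma> \<ge> 2" and G: "\<And>v. \<bar>G v\<bar> \<le> B"
  shows "(\<lambda>k. pker \<gamma> (int k) * second_diff G (real_of_int x / real n) (real k / real n)) summable_on {1..}"
    and "Kop \<beta> \<gamma> G G n x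
      = (\<Sum>\<^sub>\<infinity>k\<in>{1..}. pker \<gamma> (int k) * second_diff G (real_of_int x / real n) (real k / real n))"
proof -
  have \<gamma>0: "\<gamma> > 0"
    using \<gamma> by simp
  define f where "f = (\<lambda>r. (G (real_of_int (x + r) / real n) - G (real_of_int x / real n)) * pker \<gamma> r)"
  have "f summable_on UNIV"
  proof (rule summable_on_dominated)
    show "(\<lambda>r. 2 * B * pker \<gamma> r) summable_on UNIV"
      by (intro summable_on_cmult_right pker_summable \<gamma>0)
    fix r :: int
    have "\<bar>G (real_of_int (x + r) / real n) - G (real_of_int x / real n)\<bar> \<le> 2 * B"
      using G[of "real_of_int (x + r) / real n"] G[of "real_of_int x / real n"] by linarith
    then show "\<bar>f r\<bar> \<le> 2 * B * pker \<gamma> r"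
      unfolding f_def using pker_nonneg[OF \<gamma>0, of r] by (simp add: abs_mult mult_right_mono)
  qed
  note symmetric = infsum_int_symmetric[OF this]
  have pair: "f (int k) + f (- int k)
      = pker \<gamma> (int k) * second_diff G (real_of_int x / real n) (real k / real n)" for k
    by (simp add: f_def second_diff_def add_divide_distrib diff_divide_distrib algebra_simps)
  show "(\<lambda>k. pker \<gamma> (int k) * second_diff G (real_of_int x / real n) (real k / real n)) summable_on {1..}"
    using symmetric(1) by (simp only: pair)
  have "Kop \<beta> \<gamma> G G n x = infsum f UNIV"
    using \<beta> by (simp add: Kop_def Let_def glue_def f_def)
  also have "\<dots> = (\<Sum>\<^sub>\<infinity>k\<in>{1..}. pker \<gamma> (int k) * second_diff G (real_of_int x / real n) (real k / real n))"
    using symmetric(2) unfolding pair by (simp add: f_def)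
  finally show "Kop \<beta> \<gamma> G G n x
      = (\<Sum>\<^sub>\<infinity>k\<in>{1..}. pker \<gamma> (int k) * second_diff G (real_of_int x / real n) (real k / real n))" .
qed

text \<open>
  \<open>m\<close> is the number of jumps towards the origin that stay on the half line: \<open>m = x\<close> on the
  nonnegative side, and \<open>m = -x - 1\<close> after reflecting the negative side.
\<close>

definition half_line_increment :: "(real \<Rightarrow> real) \<Rightarrow> real \<Rightarrow> nat \<Rightarrow> nat \<Rightarrow> int \<Rightarrow> nat \<Rightarrow> real" where
  "half_line_increment H D m n x k =
     (if k \<le> m then second_diff H (real_of_int x / real n) (real k / real n)
      else first_order_rem H D (real_of_int x / real n) (real k / real n))"

lemma jump_increment_summable:
  assumes \<gamma>: "\<gamma> \<ge> 2" and H: "\<And>v. \<bar>H v\<bar> \<le> B"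
  shows "(\<lambda>r. (H (real_of_int (x + r) / real n) - H (real_of_int x / real n)
      - D * real_of_int r / real n) * pker \<gamma> r) summable_on UNIV" (is "?f summable_on _")
proof (rule summable_on_dominated)
  have \<gamma>0: "\<gamma> > 0"
    using \<gamma> by simp
  show "(\<lambda>r. 2 * B * pker \<gamma> r + \<bar>D\<bar> / real n * (\<bar>real_of_int r\<bar> ^ 1 * pker \<gamma> r)) summable_on UNIV"
    using \<gamma> by (intro summable_on_add summable_on_cmult_right pker_summable \<gamma>0 pker_moment_summable) simp
  fix r :: int
  have "\<bar>H (real_of_int (x + r) / real n) - H (real_of_int x / real n) - D * real_of_int r / real n\<bar>
      \<le> 2 * B + \<bar>D\<bar> / real n * \<bar>real_of_int r\<bar>"
  proof -
    have tri: "\<bar>a - b - c\<bar> \<le> \<bar>a\<bar> + \<bar>b\<bar> + \<bar>c\<bar>" for a b c :: real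
      by arith
    have "\<bar>D * real_of_int r / real n\<bar> = \<bar>D\<bar> / real n * \<bar>real_of_int r\<bar>"
      by (simp add: abs_mult)
    then show ?thesis
      using tri[of "H (real_of_int (x + r) / real n)" "H (real_of_int x / real n)" "D * real_of_int r / real n"]
        H[of "real_of_int (x + r) / real n"] H[of "real_of_int x / real n"]
      by linarith
  qed
  then have "\<bar>?f r\<bar> \<le> (2 * B + \<bar>D\<bar> / real n * \<bar>real_of_int r\<bar>) * pker \<gamma> r"
    unfolding abs_mult using pker_nonneg[OF \<gamma>0, of r] by (simp add: mult_right_mono)
  then show "\<bar>?f r\<bar> \<le> 2 * B * pker \<gamma> r + \<bar>D\<bar> / real n * (\<bar>real_of_int r\<bar> ^ 1 * pker \<gamma> r)"
    by (simp add: algebra_simps)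
qed

lemma infsum_half_line_increments:
  assumes "\<gamma> \<ge> 2" and "\<And>v. \<bar>H v\<bar> \<le> B"
  shows "(\<lambda>k. pker \<gamma> (int k) * half_line_increment H D m n x k) summable_on {1..}"
    and "(\<Sum>\<^sub>\<infinity>r\<in>{- int m..}. (H (real_of_int (x + r) / real n) - H (real_of_int x / real n)
            - D * real_of_int r / real n) * pker \<gamma> r)
      = (\<Sum>\<^sub>\<infinity>k\<in>{1..}. pker \<gamma> (int k) * half_line_increment H D m n x k)"
proof -
  define f where "f = (\<lambda>r. (H (real_of_int (x + r) / real n) - H (real_of_int x / real n)
      - D * real_of_int r / real n) * pker \<gamma> r)"
  have "f summable_on UNIV"
    unfolding f_def by (rule jump_increment_summable[OF assms])
  moreover have "f 0 = 0"
    by (simp add: f_def)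
  ultimately have half_line: "(\<lambda>k::nat. (if int k \<in> {- int m..} then f (int k) else 0)
        + (if - int k \<in> {- int m..} then f (- int k) else 0)) summable_on {1..}"
    "infsum f {- int m..} = (\<Sum>\<^sub>\<infinity>k\<in>{1..}. (if int k \<in> {- int m..} then f (int k) else 0)
        + (if - int k \<in> {- int m..} then f (- int k) else 0))"
    by (rule infsum_int_restrict_symmetric)+
  have pair: "(if int k \<in> {- int m..} then f (int k) else 0)
      + (if - int k \<in> {- int m..} then f (- int k) else 0) = pker \<gamma> (int k) * half_line_increment H D m n x k" for k
    by (simp add: f_def half_line_increment_def second_diff_def first_order_rem_def
        add_divide_distrib diff_divide_distrib algebra_simps)
  show "(\<lambda>k. pker \<gamma> (int k) * half_line_increment H D m n x k) summable_on {1..}"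
    using half_line(1) unfolding pair .
  show "(\<Sum>\<^sub>\<infinity>r\<in>{- int m..}. (H (real_of_int (x + r) / real n) - H (real_of_int x / real n)
            - D * real_of_int r / real n) * pker \<gamma> r)
      = (\<Sum>\<^sub>\<infinity>k\<in>{1..}. pker \<gamma> (int k) * half_line_increment H D m n x k)"
    using half_line(2) unfolding pair by (simp only: f_def)
qed

lemma Kop_half_line_nonneg:
  assumes \<beta>: "\<not> \<beta> < 1" and x: "0 \<le> x" and n: "n \<ge> 1"
  shows "Kop \<beta> \<gamma> Gm Gp n x = (\<Sum>\<^sub>\<infinity>r\<in>{- int (nat x)..}. (Gp (real_of_int (x + r) / real n)
    - Gp (real_of_int x / real n) - deriv Gp 0 * real_of_int r / real n) * pker \<gamma> r)"
proof -
  define g where "g = (\<lambda>y. (glue Gm Gp (real_of_int y / real n) - glue Gm Gp (real_of_int x / real n)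
    - deriv Gp 0 * real_of_int (y - x) / real n) * pker \<gamma> (y - x))"
  have shift: "bij_betw (\<lambda>r. x + r) {- x..} {0..}"
    by (rule bij_betwI[of _ _ _ "\<lambda>y. y - x"]) auto
  have "Kop \<beta> \<gamma> Gm Gp n x = infsum g {0..}"
    using \<beta> x by (simp add: Kop_def Let_def g_def)
  also have "\<dots> = (\<Sum>\<^sub>\<infinity>r\<in>{- x..}. g (x + r))"
    using infsum_reindex_bij_betw[OF shift, of g] by simp
  also have "\<dots> = (\<Sum>\<^sub>\<infinity>r\<in>{- int (nat x)..}. (Gp (real_of_int (x + r) / real n)
      - Gp (real_of_int x / real n) - deriv Gp 0 * real_of_int r / real n) * pker \<gamma> r)"
    unfolding nat_0_le[OF x]
  proof (rule infsum_cong)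
    fix r
    assume "r \<in> {- x..}"
    then have "0 \<le> real_of_int (x + r) / real n" and "0 \<le> real_of_int x / real n"
      using x by simp_all
    then show "g (x + r) = (Gp (real_of_int (x + r) / real n)
      - Gp (real_of_int x / real n) - deriv Gp 0 * real_of_int r / real n) * pker \<gamma> r"
      by (simp add: g_def glue_def)
  qed
  finally show ?thesis .
qed

lemma Kop_half_line_neg:
  assumes \<beta>: "\<not> \<beta> < 1" and x: "x < 0" and n: "n \<ge> 1"
  shows "Kop \<beta> \<gamma> Gm Gp n x = (\<Sum>\<^sub>\<infinity>r\<in>{- int (nat (- x) - 1)..}. (Gm (- (real_of_int (- x + r) / real n))
    - Gm (- (real_of_int (- x) / real n)) - (- deriv Gm 0) * real_of_int r / real n) * pker \<gamma> r)"
proof -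
  define g where "g = (\<lambda>y. (glue Gm Gp (real_of_int y / real n) - glue Gm Gp (real_of_int x / real n)
    - deriv Gm 0 * real_of_int (y - x) / real n) * pker \<gamma> (y - x))"
  have m: "- int (nat (- x) - 1) = x + 1"
    using x by simp
  have reflect: "bij_betw (\<lambda>r. x - r) {x + 1..} {..-1}"
    by (rule bij_betwI[of _ _ _ "\<lambda>y. x - y"]) auto
  have "Kop \<beta> \<gamma> Gm Gp n x = infsum g {..-1}"
    using \<beta> x by (simp add: Kop_def Let_def g_def)
  also have "\<dots> = (\<Sum>\<^sub>\<infinity>r\<in>{x + 1..}. g (x - r))"
    using infsum_reindex_bij_betw[OF reflect, of g] by simp
  also have "\<dots> = (\<Sum>\<^sub>\<infinity>r\<in>{- int (nat (- x) - 1)..}. (Gm (- (real_of_int (- x + r) / real n))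
      - Gm (- (real_of_int (- x) / real n)) - (- deriv Gm 0) * real_of_int r / real n) * pker \<gamma> r)"
    unfolding m
  proof (rule infsum_cong)
    fix r
    assume "r \<in> {x + 1..}"
    then have "real_of_int (x - r) / real n < 0" and "real_of_int x / real n < 0"
      using x n by (simp_all add: divide_neg_pos)
    then have "g (x - r) = (Gm (real_of_int (x - r) / real n) - Gm (real_of_int x / real n)
        + deriv Gm 0 * real_of_int r / real n) * pker \<gamma> r"
      by (simp add: g_def glue_def)
    moreover have "real_of_int (x - r) / real n = - (real_of_int (- x + r) / real n)"
      by (simp add: minus_divide_left)
    ultimately show "g (x - r) = (Gm (- (real_of_int (- x + r) / real n))
      - Gm (- (real_of_int (- x) / real n)) - (- deriv Gm 0) * real_of_int r / real n) * pker \<gamma> r"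
      by simp
  qed
  finally show ?thesis .
qed

context decaying_C3
begin

lemma Theta_Kop_symmetric_error:
  assumes \<beta>: "\<beta> < 1" and \<gamma>: "\<gamma> \<ge> 2" and n: "n \<ge> 1"
  shows "\<bar>Theta \<gamma> n * Kop \<beta> \<gamma> H H n x - kappa \<gamma> * H2 (real_of_int x / real n)\<bar> \<le> error_profile \<gamma> H2 M 0 n x"
  unfolding Kop_symmetric_eq(2)[where G = H, OF \<beta> \<gamma> bounded_H] error_profile_eq[OF \<gamma> disjI2[OF refl]]
proof (rule Theta_kernel_sum_error[OF \<gamma> n Kop_symmetric_eq(1)[where G = H, OF \<beta> \<gamma> bounded_H]])
  show "(\<lambda>k. pker \<gamma> (int k) * (bulk_bound M n x k + boundary_bound M 0 n x k)) summable_on {1..}"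
    using bulk_bound_pker_summable[OF \<gamma> M_nonneg] boundary_bound_pker_summable[OF \<gamma> M_nonneg, of 0]
    by (simp add: distrib_left summable_on_add)
  fix k :: nat
  show "\<bar>real n ^ 2 * second_diff H (real_of_int x / real n) (real k / real n)
      - (if k \<le> n then real k ^ 2 * H2 (real_of_int x / real n) else 0)\<bar>
    \<le> bulk_bound M n x k + boundary_bound M 0 n x k"
    using second_diff_scaled_error[OF n, of x k] boundary_bound_nonneg[OF M_nonneg, of 0 n x k]
    by linarith
qed

lemma Theta_half_line_error:
  assumes \<gamma>: "\<gamma> \<ge> 2" and n: "n \<ge> 1" and x: "0 \<le> x" "x \<le> int m + 1"
    and D: "D = H1 0" "\<gamma> > 2 \<or> D = 0"
  shows "\<bar>Theta \<gamma> n * (\<Sum>\<^sub>\<infinity>r\<in>{- int m..}. (H (real_of_int (x + r) / real n) - H (real_of_int x / real n)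
        - D * real_of_int r / real n) * pker \<gamma> r) - kappa \<gamma> * H2 (real_of_int x / real n)\<bar>
    \<le> error_profile \<gamma> H2 M D n x"
  unfolding infsum_half_line_increments(2)[where H = H, OF \<gamma> bounded_H] error_profile_eq[OF \<gamma> D(2)]
proof (rule Theta_kernel_sum_error[OF \<gamma> n infsum_half_line_increments(1)[where H = H, OF \<gamma> bounded_H]])
  show "(\<lambda>k. pker \<gamma> (int k) * (bulk_bound M n x k + boundary_bound M D n x k)) summable_on {1..}"
    using bulk_bound_pker_summable[OF \<gamma> M_nonneg] boundary_bound_pker_summable[OF \<gamma> M_nonneg D(2)]
    by (simp add: distrib_left summable_on_add)
  fix k :: nat
  show "\<bar>real n ^ 2 * half_line_increment H D m n x k
      - (if k \<le> n then real k ^ 2 * H2 (real_of_int x / real n) else 0)\<bar>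
    \<le> bulk_bound M n x k + boundary_bound M D n x k"
  proof (cases "k \<le> m")
    case True
    then show ?thesis
      using second_diff_scaled_error[OF n, of x k] boundary_bound_nonneg[OF M_nonneg, of D n x k]
      by (simp add: half_line_increment_def)
  next
    case False
    then show ?thesis
      using first_order_rem_scaled_error[OF n, of x k] x D(1) by (simp add: half_line_increment_def)
  qed
qed

end

lemma negligible_Kop_error_symmetric:
  assumes \<beta>: "\<beta> < 1" and \<gamma>: "\<gamma> \<ge> 2" and G: "schwartz G"
  shows "negligible_error (\<lambda>n x. \<bar>Theta \<gamma> n * Kop \<beta> \<gamma> G G n x - kappa \<gamma> * lapl G G (real_of_int x / real n)\<bar>)"
proof -
  obtain M where "decaying_C3 G (deriv G) (deriv (deriv G)) (deriv (deriv (deriv G))) M"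
    using schwartz_decaying_C3[OF G] by blast
  then interpret decaying_C3 G "deriv G" "deriv (deriv G)" "deriv (deriv (deriv G))" M .
  show ?thesis
    by (rule negligible_error_dominated[OF _ _ negligible_error_profile[OF \<gamma> disjI2[OF refl]]])
      (simp_all add: lapl_def Theta_Kop_symmetric_error[OF \<beta> \<gamma>])
qed

lemma negligible_Kop_error_half_line:
  assumes \<beta>: "\<not> \<beta> < 1" and \<gamma>: "\<gamma> \<ge> 2" and Gm: "schwartz Gm" and Gp: "schwartz Gp"
    and D: "\<gamma> > 2 \<or> deriv Gm 0 = 0 \<and> deriv Gp 0 = 0"
  shows "negligible_error
    (\<lambda>n x. \<bar>Theta \<gamma> n * Kop \<beta> \<gamma> Gm Gp n x - kappa \<gamma> * lapl Gm Gp (real_of_int x / real n)\<bar>)"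
proof -
  obtain Mp where "decaying_C3 Gp (deriv Gp) (deriv (deriv Gp)) (deriv (deriv (deriv Gp))) Mp"
    using schwartz_decaying_C3[OF Gp] by blast
  then interpret P: decaying_C3 Gp "deriv Gp" "deriv (deriv Gp)" "deriv (deriv (deriv Gp))" Mp .
  obtain Mm where "decaying_C3 Gm (deriv Gm) (deriv (deriv Gm)) (deriv (deriv (deriv Gm))) Mm"
    using schwartz_decaying_C3[OF Gm] by blast
  from decaying_C3_reflect[OF this]
  interpret R: decaying_C3 "\<lambda>v. Gm (- v)" "\<lambda>v. - deriv Gm (- v)" "\<lambda>v. deriv (deriv Gm) (- v)"
    "\<lambda>v. - deriv (deriv (deriv Gm)) (- v)" Mm .
  define Bp where "Bp = error_profile \<gamma> (deriv (deriv Gp)) Mp (deriv Gp 0)"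
  define Bm where "Bm = error_profile \<gamma> (\<lambda>v. deriv (deriv Gm) (- v)) Mm (- deriv Gm 0)"
  have Bp: "negligible_error Bp"
    unfolding Bp_def using P.negligible_error_profile[OF \<gamma>] D by auto
  have Bm: "negligible_error Bm"
    unfolding Bm_def using R.negligible_error_profile[OF \<gamma>] D by auto
  show ?thesis
  proof (rule negligible_error_dominated[OF _ _ negligible_error_add[OF Bp negligible_error_reflect[OF Bm]]])
    fix n :: nat and x :: int
    assume n: "n \<ge> 1"
    have "0 \<le> Bp n x" and "0 \<le> Bm n (- x)"
      using Bp Bm n unfolding negligible_error_def by blast+
    moreover have "\<bar>Theta \<gamma> n * Kop \<beta> \<gamma> Gm Gp n x - kappa \<gamma> * lapl Gm Gp (real_of_int x / real n)\<bar> \<le> Bp n x"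
      if x: "0 \<le> x"
    proof -
      have "\<bar>Theta \<gamma> n * (\<Sum>\<^sub>\<infinity>r\<in>{- int (nat x)..}. (Gp (real_of_int (x + r) / real n)
          - Gp (real_of_int x / real n) - deriv Gp 0 * real_of_int r / real n) * pker \<gamma> r)
          - kappa \<gamma> * deriv (deriv Gp) (real_of_int x / real n)\<bar> \<le> Bp n x"
        unfolding Bp_def by (rule P.Theta_half_line_error[OF \<gamma> n x]) (use x D in auto)
      moreover have "0 \<le> real_of_int x / real n"
        using x by simp
      ultimately show ?thesis
        by (simp add: Kop_half_line_nonneg[OF \<beta> x n] lapl_def)
    qed
    moreover have "\<bar>Theta \<gamma> n * Kop \<beta> \<gamma> Gm Gp n x - kappa \<gamma> * lapl Gm Gp (real_of_int x / real n)\<bar> \<le> Bm n (- x)"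
      if x: "x < 0"
    proof -
      have "\<bar>Theta \<gamma> n * (\<Sum>\<^sub>\<infinity>r\<in>{- int (nat (- x) - 1)..}. (Gm (- (real_of_int (- x + r) / real n))
          - Gm (- (real_of_int (- x) / real n)) - (- deriv Gm 0) * real_of_int r / real n) * pker \<gamma> r)
          - kappa \<gamma> * deriv (deriv Gm) (- (real_of_int (- x) / real n))\<bar> \<le> Bm n (- x)"
        unfolding Bm_def by (rule R.Theta_half_line_error[OF \<gamma> n]) (use x D in auto)
      moreover have "real_of_int x / real n < 0"
        using x n by (simp add: divide_neg_pos)
      ultimately show ?thesis
        by (simp add: Kop_half_line_neg[OF \<beta> x n] lapl_def)
    qed
    ultimately show "\<bar>Theta \<gamma> n * Kop \<beta> \<gamma> Gm Gp n x - kappa \<gamma> * lapl Gm Gp (real_of_int x / real n)\<bar>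
      \<le> Bp n x + Bm n (- x)"
      unfolding Bp_def by (cases "0 \<le> x") (auto simp: not_le)
  qed simp
qed

lemma negligible_Kop_error:
  assumes "\<gamma> \<ge> 2" and "S_class \<alpha> \<beta> \<gamma> Gm Gp"
  shows "negligible_error
    (\<lambda>n x. \<bar>Theta \<gamma> n * Kop \<beta> \<gamma> Gm Gp n x - kappa \<gamma> * lapl Gm Gp (real_of_int x / real n)\<bar>)"
  using assms(2)
proof (cases rule: S_class_cases)
  case symmetric
  then show ?thesis
    using negligible_Kop_error_symmetric[OF _ assms(1)] by simp
next
  case half_line
  then show ?thesis
    using negligible_Kop_error_half_line[OF _ assms(1)] by simp
qed

lemma S_class_lapl_bounded:
  assumes "S_class \<alpha> \<beta> \<gamma> Gm Gp"
  obtains L where "\<And>u. \<bar>lapl Gm Gp u\<bar> \<le> L"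
proof -
  have "schwartz Gm \<and> schwartz Gp"
    using assms by (cases rule: S_class_cases) auto
  then obtain Lm Lp where "\<And>u. \<bar>deriv (deriv Gm) u\<bar> \<le> Lm" "\<And>u. \<bar>deriv (deriv Gp) u\<bar> \<le> Lp"
    by (metis schwartz_deriv2_bounded)
  then have "\<bar>lapl Gm Gp u\<bar> \<le> max Lm Lp" for u
    unfolding lapl_def by (smt (verit))
  then show ?thesis
    using that by blast
qed

theorem propositionA1:
  fixes \<alpha> \<beta> \<gamma> :: real and Gm Gp :: "real \<Rightarrow> real"
  assumes "\<gamma> \<ge> 2" and "\<alpha> > 0" and "\<beta> \<ge> 0"
    and "S_class \<alpha> \<beta> \<gamma> Gm Gp"
  shows "(\<exists>C>0. \<forall>n\<ge>1. \<forall>x::int. \<bar>Theta \<gamma> n * Kop \<beta> \<gamma> Gm Gp n x\<bar> \<le> C)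
    \<and> (\<forall>n\<ge>1. (\<lambda>x::int. \<bar>Theta \<gamma> n * Kop \<beta> \<gamma> Gm Gp n x
                 - kappa \<gamma> * lapl Gm Gp (real_of_int x / real n)\<bar>) summable_on UNIV)
    \<and> ((\<lambda>n. (1 / real n) * (\<Sum>\<^sub>\<infinity>x\<in>(UNIV::int set).
            \<bar>Theta \<gamma> n * Kop \<beta> \<gamma> Gm Gp n x - kappa \<gamma> * lapl Gm Gp (real_of_int x / real n)\<bar>))
          \<longlonglongrightarrow> 0)"
proof -
  define E where "E = (\<lambda>n x. \<bar>Theta \<gamma> n * Kop \<beta> \<gamma> Gm Gp n x - kappa \<gamma> * lapl Gm Gp (real_of_int x / real n)\<bar>)"
  have E: "negligible_error E"
    unfolding E_def by (rule negligible_Kop_error[OF assms(1,4)])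
  then obtain C where C: "\<And>n x. n \<ge> 1 \<Longrightarrow> E n x \<le> C"
    unfolding negligible_error_def by blast
  obtain L where L: "\<And>u. \<bar>lapl Gm Gp u\<bar> \<le> L"
    using S_class_lapl_bounded[OF assms(4)] by blast
  have "\<bar>kappa \<gamma> * lapl Gm Gp u\<bar> \<le> \<bar>kappa \<gamma>\<bar> * L" for u
    unfolding abs_mult by (rule mult_left_mono[OF L abs_ge_zero])
  then have "\<bar>Theta \<gamma> n * Kop \<beta> \<gamma> Gm Gp n x\<bar> \<le> C + \<bar>kappa \<gamma>\<bar> * L" if "n \<ge> 1" for n x
    using C[OF that, of x] unfolding E_def by (smt (verit))
  then show ?thesis
    using E unfolding negligible_error_def E_def
    by (intro conjI exI[of _ "max 1 (C + \<bar>kappa \<gamma>\<bar> * L)"]) (auto intro: order_trans[OF _ max.cobounded2])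
qed

end
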